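(* For every $\rho>0$ and every finite subsets $y\subset z$ of $\mathbb{R}^+$, $(\Gamma^{\rho,y}_t;t\ge0)\overset{d}{=}(\Gamma^{\rho,z}_t|_y;t\ge0)$, where $\Gamma^{\rho,z}|_y$ is the partition of $y$ induced by $\Gamma^{\rho,z}$ (with initial conditions related by restriction), and $\mu^{\rho,y}=\mathrm{Rest}_y\star\mu^{\rho,z}$.
   Context: For a finite set $z=\{z_0<\dots<z_n\}\subset\mathbb{R}^+$, the ARG $\Gamma^{\rho,z}$ is the continuous-time Markov chain on the set $\mathcal{P}_z$ of partitions of $z$ in which each pair of blocks merges at rate $1$, and each block $\{z_{i_1}<\dots<z_{i_k}\}$ splits into $\{z_{i_1},\dots,z_{i_j}\}$ and $\{z_{i_{j+1}},\dots,z_{i_k}\}$ ($j<k$) at rate $\rho(z_{i_{j+1}}-z_{i_j})$; no other transitions. $\mu^{\rho,z}$ is its unique invariant probability measure. $\mathrm{Rest}_y:\mathcal{P}_z\to\mathcal{P}_y$ maps a partition of $z$ to the partition of $y$ it induces, and $f\star\mu=\mu\circ f^{-1}$. *)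

theory Defs
  imports "HOL-Probability.Probability" "HOL-Library.Disjoint_Sets"
begin

definition partitions_of :: "real set \<Rightarrow> real set set set" where
  "partitions_of z = {P. partition_on z P}"

definition Rest :: "real set \<Rightarrow> real set set \<Rightarrow> real set set" where
  "Rest y P = (\<lambda>B. B \<inter> y) ` P - {{}}"

definition merge_rate :: "real set set \<Rightarrow> real set set \<Rightarrow> real" where
  "merge_rate P P' = real (card {{A, B} | A B. A \<in> P \<and> B \<in> P \<and> A \<noteq> B \<and>
                                   P' = insert (A \<union> B) (P - {A, B})})"

definition split_rate :: "real \<Rightarrow> real set set \<Rightarrow> real set set \<Rightarrow> real" where
  "split_rate \<rho> P P' = (\<Sum>(A, a, b) \<in> {(A, a, b). A \<in> P \<and> a \<in> A \<and> b \<in> A \<and> a < b \<and>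
        \<not> (\<exists>c\<in>A. a < c \<and> c < b) \<and>
        P' = insert {x\<in>A. x \<le> a} (insert {x\<in>A. b \<le> x} (P - {A}))}. \<rho> * (b - a))"

definition jump_rate :: "real \<Rightarrow> real set set \<Rightarrow> real set set \<Rightarrow> real" where
  "jump_rate \<rho> P P' = merge_rate P P' + split_rate \<rho> P P'"

definition arg_gen :: "real \<Rightarrow> real set \<Rightarrow> real set set \<Rightarrow> real set set \<Rightarrow> real" where
  "arg_gen \<rho> z P P' =
     (if P = P' then - (\<Sum>P''\<in>partitions_of z - {P}. jump_rate \<rho> P P'')
      else jump_rate \<rho> P P')"

fun mat_pow :: "'s set \<Rightarrow> ('s \<Rightarrow> 's \<Rightarrow> real) \<Rightarrow> nat \<Rightarrow> 's \<Rightarrow> 's \<Rightarrow> real" where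
  "mat_pow S Q 0 = (\<lambda>x x'. if x = x' then 1 else 0)"
| "mat_pow S Q (Suc n) = (\<lambda>x x'. \<Sum>w\<in>S. mat_pow S Q n x w * Q w x')"

definition arg_trans :: "real \<Rightarrow> real set \<Rightarrow> real \<Rightarrow> real set set \<Rightarrow> real set set \<Rightarrow> real" where
  "arg_trans \<rho> z t P P' =
     (\<Sum>n. t ^ n / fact n * mat_pow (partitions_of z) (arg_gen \<rho> z) n P P')"

fun path_prob :: "(real \<Rightarrow> 's \<Rightarrow> 's \<Rightarrow> real) \<Rightarrow> 's \<Rightarrow> real \<Rightarrow> real list \<Rightarrow> 's list \<Rightarrow> real" where
  "path_prob tr x0 t0 (t # ts) (x # xs) = tr (t - t0) x0 x * path_prob tr x t ts xs"
| "path_prob tr x0 t0 [] [] = 1"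
| "path_prob tr x0 t0 _ _ = 0"

(* Finite-dimensional distributions of Gamma^{rho,z} started from initial law pi:
   P(Gamma_{t_1} = x_1, ..., Gamma_{t_k} = x_k)  for 0 <= t_1 <= ... <= t_k *)
definition arg_fdd :: "real \<Rightarrow> real set \<Rightarrow> real set set pmf \<Rightarrow> real list \<Rightarrow> real set set list \<Rightarrow> real" where
  "arg_fdd \<rho> z \<pi> ts xs =
     (\<Sum>x0\<in>partitions_of z. pmf \<pi> x0 * path_prob (arg_trans \<rho> z) x0 0 ts xs)"

definition arg_invariant :: "real \<Rightarrow> real set \<Rightarrow> real set set pmf \<Rightarrow> bool" where
  "arg_invariant \<rho> z \<mu> \<longleftrightarrow> set_pmf \<mu> \<subseteq> partitions_of z \<and>
     (\<forall>t\<ge>0. \<forall>P'\<in>partitions_of z.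
        (\<Sum>P\<in>partitions_of z. pmf \<mu> P * arg_trans \<rho> z t P P') = pmf \<mu> P')"

definition arg_mu :: "real \<Rightarrow> real set \<Rightarrow> real set set pmf" where
  "arg_mu \<rho> z = (THE \<mu>. arg_invariant \<rho> z \<mu>)"

end

theory Submission
  imports Defs
begin

text \<open>
  The generator of the ARG on \<open>z\<close> is lumpable with respect to \<open>Rest y\<close>: from a partition \<open>P\<close>,
  the total rate of the jumps of the ARG on \<open>z\<close> into \<open>{P'. Rest y P' = w}\<close> equals the rate of the
  jump \<open>Rest y P \<rightarrow> w\<close> of the ARG on \<open>y\<close>. A merge is seen on \<open>y\<close> only if both merged blocks meet
  \<open>y\<close>, and such pairs of blocks correspond bijectively to the pairs of blocks of \<open>Rest y P\<close>. A split
  of a block \<open>A\<close> between consecutive points \<open>a < b\<close> is seen on \<open>y\<close> only if it separates two points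
  of \<open>A \<inter> y\<close>, and then it is seen as the split of \<open>A \<inter> y\<close> between the consecutive points
  \<open>a' \<le> a < b \<le> b'\<close> of \<open>A \<inter> y\<close>; the rates \<open>\<rho> * (b - a)\<close> of these splits telescope to
  \<open>\<rho> * (b' - a')\<close>.

  Lumpability passes from the generators to the transition matrices \<open>exp (t Q)\<close>, hence to all
  finite-dimensional distributions, and it maps invariant laws to invariant laws. Every partition
  communicates with the partition into singletons, so the ARG is irreducible and its invariant law is
  unique; therefore \<open>arg_mu \<rho> y\<close> is the image of \<open>arg_mu \<rho> z\<close> under \<open>Rest y\<close>.
\<close>

section \<open>Exponentials of finite matrices\<close>

lemma mat_pow_Suc_apply: "mat_pow S Q (Suc n) x x' = (\<Sum>w\<in>S. mat_pow S Q n x w * Q w x')"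
  by simp

declare mat_pow.simps(2)[simp del]

lemma mat_pow_Suc_0:
  assumes "finite S" "x \<in> S"
  shows "mat_pow S Q (Suc 0) x x' = Q x x'"
proof -
  have "mat_pow S Q (Suc 0) x x' = (\<Sum>w\<in>S. if x = w then Q w x' else 0)"
    unfolding mat_pow_Suc_apply by (intro sum.cong) auto
  then show ?thesis using assms by simp
qed

lemma abs_mat_pow_le:
  assumes "\<And>w w'. w \<in> S \<Longrightarrow> w' \<in> S \<Longrightarrow> \<bar>Q w w'\<bar> \<le> M" "0 \<le> M" "x' \<in> S"
  shows "\<bar>mat_pow S Q n x x'\<bar> \<le> (real (card S) * M) ^ n"
  using assms(3)
proof (induction n arbitrary: x')
  case 0
  then show ?case by simp
next
  case (Suc n)
  have "\<bar>mat_pow S Q (Suc n) x x'\<bar> \<le> (\<Sum>w\<in>S. \<bar>mat_pow S Q n x w\<bar> * \<bar>Q w x'\<bar>)"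
    unfolding mat_pow_Suc_apply abs_mult[symmetric] by (rule sum_abs)
  also have "\<dots> \<le> (\<Sum>w\<in>S. (real (card S) * M) ^ n * M)"
    using Suc assms by (intro sum_mono mult_mono) auto
  finally show ?case by (simp add: mult_ac)
qed

lemma mat_pow_exponential_bound:
  assumes "finite S" "x' \<in> S"
  obtains C where "0 \<le> C" "\<And>n x. \<bar>mat_pow S Q n x x'\<bar> \<le> C ^ n"
proof -
  define M where "M = (\<Sum>w\<in>S. \<Sum>w'\<in>S. \<bar>Q w w'\<bar>)"
  have "\<bar>Q w w'\<bar> \<le> M" if "w \<in> S" "w' \<in> S" for w w'
  proof -
    have "\<bar>Q w w'\<bar> \<le> (\<Sum>w'\<in>S. \<bar>Q w w'\<bar>)"
      using that assms by (intro member_le_sum) auto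
    also have "\<dots> \<le> M"
      unfolding M_def using that assms
      by (intro member_le_sum[where f = "\<lambda>w. \<Sum>w'\<in>S. \<bar>Q w w'\<bar>"]) (auto intro: sum_nonneg)
    finally show ?thesis .
  qed
  moreover have "0 \<le> M" unfolding M_def by (simp add: sum_nonneg)
  ultimately have "\<bar>mat_pow S Q n x x'\<bar> \<le> (real (card S) * M) ^ n" for n x
    using abs_mat_pow_le[of S Q M x' n x] assms(2) by blast
  with \<open>0 \<le> M\<close> show ?thesis
    by (intro that[of "real (card S) * M"]) auto
qed

definition mat_exp :: "'s set \<Rightarrow> ('s \<Rightarrow> 's \<Rightarrow> real) \<Rightarrow> real \<Rightarrow> 's \<Rightarrow> 's \<Rightarrow> real" where
  "mat_exp S Q t x x' = (\<Sum>n. t ^ n / fact n * mat_pow S Q n x x')"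

lemma arg_trans_eq_mat_exp: "arg_trans \<rho> z = mat_exp (partitions_of z) (arg_gen \<rho> z)"
  by (simp add: fun_eq_iff arg_trans_def mat_exp_def)

lemma summable_mat_exp:
  assumes "finite S" "x' \<in> S"
  shows "summable (\<lambda>n. t ^ n / fact n * mat_pow S Q n x x')"
proof -
  obtain C where "0 \<le> C" and C: "\<And>n x. \<bar>mat_pow S Q n x x'\<bar> \<le> C ^ n"
    using mat_pow_exponential_bound[OF assms, where Q = Q] by blast
  have "norm (t ^ n / fact n * mat_pow S Q n x x') \<le> inverse (fact n) * (\<bar>t\<bar> * C) ^ n" for n
  proof -
    have "norm (t ^ n / fact n * mat_pow S Q n x x') = inverse (fact n) * \<bar>t\<bar> ^ n * \<bar>mat_pow S Q n x x'\<bar>"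
      by (simp add: abs_mult power_abs divide_inverse)
    also have "\<dots> \<le> inverse (fact n) * \<bar>t\<bar> ^ n * C ^ n"
      using C by (intro mult_left_mono) auto
    finally show ?thesis by (simp add: power_mult_distrib mult.assoc)
  qed
  then show ?thesis
    by (intro summable_comparison_test[OF _ summable_exp[of "\<bar>t\<bar> * C"]]) auto
qed

lemma sums_left_mult_mat_exp:
  assumes "finite S" "x' \<in> S"
  shows "(\<lambda>n. (\<Sum>x\<in>S. \<mu> x * mat_pow S Q n x x') / fact n * t ^ n)
           sums (\<Sum>x\<in>S. \<mu> x * mat_exp S Q t x x')"
proof -
  have "(\<lambda>n. \<Sum>x\<in>S. \<mu> x * (t ^ n / fact n * mat_pow S Q n x x'))
          sums (\<Sum>x\<in>S. \<mu> x * mat_exp S Q t x x')"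
    unfolding mat_exp_def by (intro sums_sum sums_mult summable_sums summable_mat_exp assms)
  moreover have "(\<Sum>x\<in>S. \<mu> x * (t ^ n / fact n * mat_pow S Q n x x'))
      = (\<Sum>x\<in>S. \<mu> x * mat_pow S Q n x x') / fact n * t ^ n" for n
    unfolding sum_divide_distrib sum_distrib_right by (rule sum.cong) simp_all
  ultimately show ?thesis by simp
qed

lemma mat_exp_eq_0_if_column_eq_0:
  assumes "\<And>u. u \<in> S \<Longrightarrow> Q u x' = 0" "x \<noteq> x'"
  shows "mat_exp S Q t x x' = 0"
proof -
  have "mat_pow S Q n x x' = 0" for n
    using assms by (cases n) (auto simp: mat_pow_Suc_apply)
  then show ?thesis by (simp add: mat_exp_def)
qed

lemma powser_const_at_right_imp_coeff_1_eq_0: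
  fixes c :: "nat \<Rightarrow> real"
  assumes summable: "\<And>t. summable (\<lambda>n. c n * t ^ n)"
    and const: "\<And>t. t > 0 \<Longrightarrow> (\<Sum>n. c n * t ^ n) = c 0"
  shows "c 1 = 0"
proof -
  define g where "g t = (\<Sum>n. c (Suc n) * t ^ n)" for t :: real
  have "isCont g 0"
    unfolding g_def using powser_split_head(3)[OF summable]
    by (rule isCont_powser_converges_everywhere)
  then have "(g \<longlongrightarrow> g 0) (at_right 0)"
    by (simp add: isCont_def filterlim_at_split)
  moreover have "\<forall>\<^sub>F t in at_right 0. g t = 0"
    using eventually_at_right_less[of "0::real"]
  proof eventually_elim
    case (elim t)
    then show ?case using powser_split_head(1)[OF summable, of t] const[of t] by (simp add: g_def)
  qed
  ultimately have "((\<lambda>_. 0) \<longlongrightarrow> g 0) (at_right (0::real))"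
    by (rule Lim_transform_eventually)
  then have "g 0 = 0" by (simp add: tendsto_const_iff)
  then show ?thesis by (simp add: g_def)
qed

lemma left_null_if_mat_exp_invariant:
  assumes "finite S" "x' \<in> S"
    and invariant: "\<And>t. t > 0 \<Longrightarrow> (\<Sum>x\<in>S. \<mu> x * mat_exp S Q t x x') = \<mu> x'"
  shows "(\<Sum>x\<in>S. \<mu> x * Q x x') = 0"
proof -
  define c where "c n = (\<Sum>x\<in>S. \<mu> x * mat_pow S Q n x x') / fact n" for n
  have series: "(\<lambda>n. c n * t ^ n) sums (\<Sum>x\<in>S. \<mu> x * mat_exp S Q t x x')" for t
    unfolding c_def by (rule sums_left_mult_mat_exp[OF assms(1,2)])
  have "(\<Sum>x\<in>S. \<mu> x * mat_pow S Q 0 x x') = (\<Sum>x\<in>S. if x = x' then \<mu> x else 0)"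
    by (rule sum.cong) auto
  then have c0: "c 0 = \<mu> x'"
    using assms(1,2) by (simp add: c_def)
  have "c 1 = 0"
  proof (rule powser_const_at_right_imp_coeff_1_eq_0)
    show "summable (\<lambda>n. c n * t ^ n)" for t using series by (rule sums_summable)
    show "(\<Sum>n. c n * t ^ n) = c 0" if "t > 0" for t
      using series[THEN sums_unique] invariant[OF that] c0 by simp
  qed
  then show ?thesis using assms(1) by (simp add: c_def mat_pow_Suc_0 cong: sum.cong)
qed

section \<open>Stationary laws of finite Q-matrices\<close>

lemma mat_pow_nonneg:
  assumes "\<And>w w'. w \<in> S \<Longrightarrow> w' \<in> S \<Longrightarrow> 0 \<le> K w w'" "x' \<in> S"
  shows "0 \<le> mat_pow S K n x x'"
  using assms(2)
proof (induction n arbitrary: x')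
  case (Suc n)
  then show ?case using assms(1) by (auto simp: mat_pow_Suc_apply intro!: sum_nonneg)
qed simp

lemma mat_pow_row_sum_eq_1:
  assumes "finite S" "\<And>w. w \<in> S \<Longrightarrow> (\<Sum>w'\<in>S. K w w') = 1" "x \<in> S"
  shows "(\<Sum>x'\<in>S. mat_pow S K n x x') = 1"
proof (induction n)
  case 0
  then show ?case using assms(1,3) by simp
next
  case (Suc n)
  have "(\<Sum>x'\<in>S. mat_pow S K (Suc n) x x') = (\<Sum>w\<in>S. mat_pow S K n x w * (\<Sum>x'\<in>S. K w x'))"
    unfolding mat_pow_Suc_apply sum_distrib_left by (rule sum.swap)
  also have "\<dots> = 1" using assms(2) Suc by simp
  finally show ?case .
qed

lemma mat_pow_partial_sum_defect:
  "(\<Sum>x\<in>S. (\<Sum>n<N. mat_pow S K n u x) * K x x') - (\<Sum>n<N. mat_pow S K n u x')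
     = mat_pow S K N u x' - mat_pow S K 0 u x'"
proof -
  have "(\<Sum>x\<in>S. (\<Sum>n<N. mat_pow S K n u x) * K x x') = (\<Sum>n<N. mat_pow S K (Suc n) u x')"
    unfolding mat_pow_Suc_apply sum_distrib_right by (rule sum.swap)
  then show ?thesis
    using sum_lessThan_telescope[of "\<lambda>n. mat_pow S K n u x'" N] by (simp only: sum_subtractf)
qed

lemma convergent_subseq_finite_family:
  fixes f :: "nat \<Rightarrow> 'a \<Rightarrow> real"
  assumes "finite F" "\<And>n x. x \<in> F \<Longrightarrow> \<bar>f n x\<bar> \<le> B"
  shows "\<exists>r. strict_mono r \<and> (\<forall>x\<in>F. convergent (\<lambda>n. f (r n) x))"
  using assms
proof (induction F rule: finite_induct)
  case empty
  then show ?case by (auto intro: exI[of _ id] simp: strict_mono_def)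
next
  case (insert a F)
  obtain r where r: "strict_mono r" "\<forall>x\<in>F. convergent (\<lambda>n. f (r n) x)"
    using insert by auto
  obtain s where s: "strict_mono s" "monoseq (\<lambda>n. f (r (s n)) a)"
    using seq_monosub[of "\<lambda>n. f (r n) a"] by (auto simp: o_def)
  have "Bseq (\<lambda>n. f (r (s n)) a)"
    using insert.prems by (intro BseqI'[where K = B]) auto
  then have "convergent (\<lambda>n. f (r (s n)) a)"
    using s(2) Bseq_monoseq_convergent by blast
  moreover have "convergent (\<lambda>n. f (r (s n)) x)" if "x \<in> F" for x
    using convergent_subseq_convergent[OF r(2)[rule_format, OF that] s(1)] by (simp add: o_def)
  moreover have "strict_mono (\<lambda>n. r (s n))"
    using strict_mono_o[OF r(1) s(1)] by (simp add: o_def)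
  ultimately show ?case by auto
qed

lemma stochastic_mat_pow_le_1:
  fixes K :: "'s \<Rightarrow> 's \<Rightarrow> real"
  assumes "finite S" "\<And>w w'. w \<in> S \<Longrightarrow> w' \<in> S \<Longrightarrow> 0 \<le> K w w'"
    "\<And>w. w \<in> S \<Longrightarrow> (\<Sum>w'\<in>S. K w w') = 1" "x \<in> S" "x' \<in> S"
  shows "mat_pow S K n x x' \<le> 1"
proof -
  have "mat_pow S K n x x' \<le> (\<Sum>x'\<in>S. mat_pow S K n x x')"
    using assms mat_pow_nonneg[where K = K, OF assms(2)] by (intro member_le_sum) auto
  then show ?thesis using mat_pow_row_sum_eq_1[of S K, OF assms(1,3,4)] by simp
qed

lemma stochastic_cesaro_defect:
  fixes K :: "'s \<Rightarrow> 's \<Rightarrow> real" and N :: nat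
  assumes "finite S" "\<And>w w'. w \<in> S \<Longrightarrow> w' \<in> S \<Longrightarrow> 0 \<le> K w w'"
    "\<And>w. w \<in> S \<Longrightarrow> (\<Sum>w'\<in>S. K w w') = 1" "u \<in> S" "x' \<in> S"
  defines "A x \<equiv> (\<Sum>n<Suc N. mat_pow S K n u x) / real (Suc N)"
  shows "\<bar>(\<Sum>x\<in>S. A x * K x x') - A x'\<bar> \<le> 1 / real (Suc N)"
proof -
  have "(\<Sum>x\<in>S. A x * K x x') - A x'
      = ((\<Sum>x\<in>S. (\<Sum>n<Suc N. mat_pow S K n u x) * K x x') - (\<Sum>n<Suc N. mat_pow S K n u x'))
        / real (Suc N)"
    by (simp add: A_def diff_divide_distrib flip: sum_divide_distrib del: sum.lessThan_Suc)
  also have "\<dots> = (mat_pow S K (Suc N) u x' - mat_pow S K 0 u x') / real (Suc N)"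
    by (simp only: mat_pow_partial_sum_defect)
  finally have "(\<Sum>x\<in>S. A x * K x x') - A x'
      = (mat_pow S K (Suc N) u x' - mat_pow S K 0 u x') / real (Suc N)" .
  moreover have "\<bar>mat_pow S K (Suc N) u x' - mat_pow S K 0 u x'\<bar> \<le> 1"
    using mat_pow_nonneg[where K = K and n = "Suc N" and x = u, OF assms(2,5)]
      mat_pow_nonneg[where K = K and n = 0 and x = u, OF assms(2,5)]
      stochastic_mat_pow_le_1[where K = K and n = "Suc N", OF assms(1-5)]
      stochastic_mat_pow_le_1[where K = K and n = 0, OF assms(1-5)]
    unfolding abs_le_iff by linarith
  then have "\<bar>mat_pow S K (Suc N) u x' - mat_pow S K 0 u x'\<bar> / real (Suc N) \<le> 1 / real (Suc N)"
    by (rule divide_right_mono) simp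
  ultimately show ?thesis by (simp only: abs_divide abs_of_nat)
qed

text \<open>A stationary law is obtained as a limit point of the Cesaro averages of the rows of the powers.\<close>

lemma stochastic_matrix_stationary_law:
  fixes K :: "'s \<Rightarrow> 's \<Rightarrow> real"
  assumes fin: "finite S" and "S \<noteq> {}"
    and nonneg: "\<And>w w'. w \<in> S \<Longrightarrow> w' \<in> S \<Longrightarrow> 0 \<le> K w w'"
    and rows: "\<And>w. w \<in> S \<Longrightarrow> (\<Sum>w'\<in>S. K w w') = 1"
  shows "\<exists>\<mu>. (\<forall>x\<in>S. 0 \<le> \<mu> x) \<and> (\<Sum>x\<in>S. \<mu> x) = 1 \<and> (\<forall>x'\<in>S. (\<Sum>x\<in>S. \<mu> x * K x x') = \<mu> x')"
proof -
  obtain u where u: "u \<in> S" using \<open>S \<noteq> {}\<close> by blast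
  define A where "A N x = (\<Sum>n<Suc N. mat_pow S K n u x) / real (Suc N)" for N x
  have A_bounds: "0 \<le> A N x \<and> A N x \<le> 1" if "x \<in> S" for N x
  proof -
    have "0 \<le> (\<Sum>n<Suc N. mat_pow S K n u x)"
      using mat_pow_nonneg[where K = K, OF nonneg that] by (intro sum_nonneg)
    moreover have "(\<Sum>n<Suc N. mat_pow S K n u x) \<le> (\<Sum>n<Suc N. 1)"
      using stochastic_mat_pow_le_1[where K = K, OF fin nonneg rows u that] by (intro sum_mono)
    ultimately show ?thesis
      by (simp add: A_def divide_le_eq del: sum.lessThan_Suc)
  qed
  have A_sum: "(\<Sum>x\<in>S. A N x) = 1" for N
  proof -
    have "(\<Sum>x\<in>S. A N x) = (\<Sum>n<Suc N. \<Sum>x\<in>S. mat_pow S K n u x) / real (Suc N)"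
      unfolding A_def sum_divide_distrib[symmetric]
      by (rule arg_cong[where f = "\<lambda>s. s / real (Suc N)"], rule sum.swap)
    then show ?thesis using mat_pow_row_sum_eq_1[of S K, OF fin rows u] by simp
  qed
  obtain r where "strict_mono r" and "\<forall>x\<in>S. convergent (\<lambda>N. A (r N) x)"
    using convergent_subseq_finite_family[OF fin, of A 1] A_bounds by fastforce
  then obtain \<mu> where lim: "\<And>x. x \<in> S \<Longrightarrow> (\<lambda>N. A (r N) x) \<longlonglongrightarrow> \<mu> x"
    unfolding convergent_def by metis
  have defect: "(\<lambda>N. (\<Sum>x\<in>S. A N x * K x x') - A N x') \<longlonglongrightarrow> 0" if "x' \<in> S" for x'
  proof (rule Lim_null_comparison)
    show "\<forall>\<^sub>F N in sequentially. norm ((\<Sum>x\<in>S. A N x * K x x') - A N x') \<le> 1 / real (Suc N)"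
      using stochastic_cesaro_defect[where K = K, OF fin nonneg rows u that] by (simp add: A_def)
    show "(\<lambda>N. 1 / real (Suc N)) \<longlonglongrightarrow> 0"
      using LIMSEQ_inverse_real_of_nat by (simp add: inverse_eq_divide)
  qed
  show ?thesis
  proof (intro exI[of _ \<mu>] conjI ballI)
    show "0 \<le> \<mu> x" if "x \<in> S" for x
      by (rule LIMSEQ_le_const[OF lim[OF that]]) (use A_bounds[OF that] in blast)
    have "(\<lambda>N. \<Sum>x\<in>S. A (r N) x) \<longlonglongrightarrow> (\<Sum>x\<in>S. \<mu> x)"
      by (intro tendsto_sum lim)
    then show "(\<Sum>x\<in>S. \<mu> x) = 1"
      using A_sum by (simp add: LIMSEQ_const_iff)
    show "(\<Sum>x\<in>S. \<mu> x * K x x') = \<mu> x'" if "x' \<in> S" for x'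
    proof -
      have "(\<lambda>N. (\<Sum>x\<in>S. A (r N) x * K x x') - A (r N) x') \<longlonglongrightarrow> (\<Sum>x\<in>S. \<mu> x * K x x') - \<mu> x'"
        by (intro tendsto_diff tendsto_sum tendsto_mult_right lim that)
      moreover have "(\<lambda>N. (\<Sum>x\<in>S. A (r N) x * K x x') - A (r N) x') \<longlonglongrightarrow> 0"
        using LIMSEQ_subseq_LIMSEQ[OF defect[OF that] \<open>strict_mono r\<close>] by (simp add: o_def)
      ultimately have "(\<Sum>x\<in>S. \<mu> x * K x x') - \<mu> x' = 0" by (rule LIMSEQ_unique)
      then show ?thesis by simp
    qed
  qed
qed

locale q_matrix =
  fixes S :: "'s set" and Q :: "'s \<Rightarrow> 's \<Rightarrow> real"
  assumes finite_states: "finite S"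
    and off_diagonal_nonneg: "\<And>x x'. x \<in> S \<Longrightarrow> x' \<in> S \<Longrightarrow> x \<noteq> x' \<Longrightarrow> 0 \<le> Q x x'"
    and row_sum_eq_0: "\<And>x. x \<in> S \<Longrightarrow> (\<Sum>x'\<in>S. Q x x') = 0"
begin

lemma left_null_mat_pow_Suc:
  assumes null: "\<And>x'. x' \<in> S \<Longrightarrow> (\<Sum>x\<in>S. \<mu> x * Q x x') = 0" and "x' \<in> S"
  shows "(\<Sum>x\<in>S. \<mu> x * mat_pow S Q (Suc n) x x') = 0"
  using assms(2)
proof (induction n arbitrary: x')
  case 0
  then show ?case using null[OF 0] by (simp add: mat_pow_Suc_0 finite_states cong: sum.cong)
next
  case (Suc n)
  have "(\<Sum>x\<in>S. \<mu> x * mat_pow S Q (Suc (Suc n)) x x')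
      = (\<Sum>w\<in>S. (\<Sum>x\<in>S. \<mu> x * mat_pow S Q (Suc n) x w) * Q w x')"
    unfolding mat_pow_Suc_apply[of S Q "Suc n"] sum_distrib_left sum_distrib_right mult.assoc
    by (rule sum.swap)
  also have "\<dots> = 0" using Suc.IH by simp
  finally show ?case .
qed

lemma mat_exp_invariant_if_left_null:
  assumes null: "\<And>x'. x' \<in> S \<Longrightarrow> (\<Sum>x\<in>S. \<mu> x * Q x x') = 0" and "x' \<in> S"
  shows "(\<Sum>x\<in>S. \<mu> x * mat_exp S Q t x x') = \<mu> x'"
proof -
  have "(\<Sum>x\<in>S. \<mu> x * mat_pow S Q 0 x x') = (\<Sum>x\<in>S. if x = x' then \<mu> x else 0)"
    by (rule sum.cong) auto
  then have "(\<lambda>n. (\<Sum>x\<in>S. \<mu> x * mat_pow S Q n x x') / fact n * t ^ n)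
      = (\<lambda>n. if n = 0 then \<mu> x' else 0)"
    using left_null_mat_pow_Suc[OF null assms(2)] finite_states assms(2)
    by (auto simp: fun_eq_iff gr0_conv_Suc)
  then show ?thesis
    using sums_left_mult_mat_exp[OF finite_states assms(2), of \<mu> Q t] sums_single[of 0 "\<lambda>_. \<mu> x'"]
    by (simp add: sums_iff)
qed

lemma uniformization:
  obtains L where "0 < L"
    "\<And>x x'. x \<in> S \<Longrightarrow> x' \<in> S \<Longrightarrow> 0 \<le> (if x = x' then 1 else 0) + Q x x' / L"
    "\<And>x. x \<in> S \<Longrightarrow> (\<Sum>x'\<in>S. (if x = x' then 1 else 0) + Q x x' / L) = 1"
proof
  define L where "L = 1 + (\<Sum>x\<in>S. \<bar>Q x x\<bar>)"
  have "0 \<le> (\<Sum>x\<in>S. \<bar>Q x x\<bar>)" by (rule sum_nonneg) simp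
  then show "0 < L" unfolding L_def by linarith
  have L_diag: "- L \<le> Q x x" if "x \<in> S" for x
  proof -
    have "\<bar>Q x x\<bar> \<le> (\<Sum>x\<in>S. \<bar>Q x x\<bar>)"
      by (rule member_le_sum) (use that finite_states in auto)
    then show ?thesis unfolding L_def by linarith
  qed
  show "0 \<le> (if x = x' then 1 else 0) + Q x x' / L" if "x \<in> S" "x' \<in> S" for x x'
  proof (cases "x = x'")
    case True
    have "- 1 \<le> Q x x / L" using L_diag[OF that(1)] \<open>0 < L\<close> by (simp add: le_divide_eq)
    then show ?thesis using True by simp
  next
    case False
    then show ?thesis using off_diagonal_nonneg[OF that False] \<open>0 < L\<close> by simp
  qed
  show "(\<Sum>x'\<in>S. (if x = x' then 1 else 0) + Q x x' / L) = 1" if "x \<in> S" for x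
  proof -
    have "(\<Sum>x'\<in>S. (if x = x' then 1 else 0) + Q x x' / L)
        = (\<Sum>x'\<in>S. if x = x' then 1 else 0) + (\<Sum>x'\<in>S. Q x x') / L"
      unfolding sum.distrib sum_divide_distrib ..
    then show ?thesis using that finite_states row_sum_eq_0[OF that] by simp
  qed
qed

lemma left_null_law_exists:
  assumes "S \<noteq> {}"
  shows "\<exists>\<mu>. (\<forall>x\<in>S. 0 \<le> \<mu> x) \<and> (\<Sum>x\<in>S. \<mu> x) = 1 \<and> (\<forall>x'\<in>S. (\<Sum>x\<in>S. \<mu> x * Q x x') = 0)"
proof -
  obtain L where L: "0 < L"
    "\<And>x x'. x \<in> S \<Longrightarrow> x' \<in> S \<Longrightarrow> 0 \<le> (if x = x' then 1 else 0) + Q x x' / L"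
    "\<And>x. x \<in> S \<Longrightarrow> (\<Sum>x'\<in>S. (if x = x' then 1 else 0) + Q x x' / L) = 1"
    using uniformization by blast
  define K where "K x x' = (if x = x' then 1 else 0) + Q x x' / L" for x x'
  obtain \<mu> where \<mu>: "\<forall>x\<in>S. 0 \<le> \<mu> x" "(\<Sum>x\<in>S. \<mu> x) = 1"
      "\<forall>x'\<in>S. (\<Sum>x\<in>S. \<mu> x * K x x') = \<mu> x'"
    using stochastic_matrix_stationary_law[where K = K, OF finite_states assms L(2,3)[folded K_def]]
    by blast
  have "(\<Sum>x\<in>S. \<mu> x * Q x x') = 0" if "x' \<in> S" for x'
  proof -
    have "(\<Sum>x\<in>S. \<mu> x * K x x') = (\<Sum>x\<in>S. if x = x' then \<mu> x else 0) + (\<Sum>x\<in>S. \<mu> x * Q x x') / L"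
      unfolding K_def distrib_left sum.distrib sum_divide_distrib
      by (intro arg_cong2[where f = "(+)"] sum.cong) auto
    also have "(\<Sum>x\<in>S. if x = x' then \<mu> x else 0) = \<mu> x'"
      using that finite_states by simp
    finally show ?thesis using \<mu>(3) that L(1) by simp
  qed
  with \<mu>(1,2) show ?thesis by blast
qed

definition transitions :: "('s \<times> 's) set" where
  "transitions = {(a, b). a \<in> S \<and> b \<in> S \<and> a \<noteq> b \<and> 0 < Q a b}"

lemma left_null_pos_along_transitions:
  assumes nonneg: "\<And>x. x \<in> S \<Longrightarrow> 0 \<le> \<mu> x"
    and null: "\<And>x'. x' \<in> S \<Longrightarrow> (\<Sum>x\<in>S. \<mu> x * Q x x') = 0"
    and "(a, b) \<in> transitions\<^sup>*" "0 < \<mu> a"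
  shows "0 < \<mu> b"
  using assms(3)
proof (induction rule: rtrancl_induct)
  case base
  show ?case using assms(4) .
next
  case (step b c)
  then have bc: "b \<in> S" "c \<in> S" "b \<noteq> c" "0 < Q b c" by (auto simp: transitions_def)
  \<comment> \<open>the inflow into \<open>c\<close> must be compensated by its outflow \<open>- \<mu> c * Q c c\<close>\<close>
  have "\<mu> b * Q b c \<le> (\<Sum>x\<in>S - {c}. \<mu> x * Q x c)"
    using bc finite_states nonneg off_diagonal_nonneg by (intro member_le_sum) auto
  moreover have "\<mu> c * Q c c + (\<Sum>x\<in>S - {c}. \<mu> x * Q x c) = 0"
    using null[OF bc(2)] sum.remove[OF finite_states bc(2), of "\<lambda>x. \<mu> x * Q x c"] by simp
  moreover have "0 < \<mu> b * Q b c" using bc step.IH by simp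
  ultimately have "\<mu> c \<noteq> 0" by auto
  then show ?case using nonneg[OF bc(2)] by simp
qed

lemma left_null_law_unique:
  assumes irreducible: "\<And>a b. a \<in> S \<Longrightarrow> b \<in> S \<Longrightarrow> (a, b) \<in> transitions\<^sup>*"
    and \<mu>: "\<And>x. x \<in> S \<Longrightarrow> 0 \<le> \<mu> x" "(\<Sum>x\<in>S. \<mu> x) = 1"
      "\<And>x'. x' \<in> S \<Longrightarrow> (\<Sum>x\<in>S. \<mu> x * Q x x') = 0"
    and \<nu>: "\<And>x. x \<in> S \<Longrightarrow> 0 \<le> \<nu> x" "(\<Sum>x\<in>S. \<nu> x) = 1"
      "\<And>x'. x' \<in> S \<Longrightarrow> (\<Sum>x\<in>S. \<nu> x * Q x x') = 0"
    and "x \<in> S"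
  shows "\<mu> x = \<nu> x"
proof -
  have "\<exists>a\<in>S. 0 < \<mu> a"
  proof (rule ccontr)
    assume "\<not> (\<exists>a\<in>S. 0 < \<mu> a)"
    then have "\<forall>x\<in>S. \<mu> x = 0" using \<mu>(1) by force
    then show False using \<mu>(2) by simp
  qed
  then obtain a where a: "a \<in> S" "0 < \<mu> a" by blast
  have \<mu>_pos: "0 < \<mu> x" if "x \<in> S" for x
    using left_null_pos_along_transitions[OF \<mu>(1,3) irreducible[OF a(1) that] a(2)] .
  \<comment> \<open>subtract the largest multiple of \<open>\<mu>\<close> that keeps \<open>\<nu>\<close> nonnegative\<close>
  define c where "c = Min ((\<lambda>x. \<nu> x / \<mu> x) ` S)"
  have "c \<in> (\<lambda>x. \<nu> x / \<mu> x) ` S"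
    unfolding c_def using finite_states a(1) by (intro Min_in) auto
  then obtain x1 where x1: "x1 \<in> S" "c = \<nu> x1 / \<mu> x1" by blast
  define \<sigma> where "\<sigma> x = \<nu> x - c * \<mu> x" for x
  have \<sigma>_nonneg: "0 \<le> \<sigma> x" if "x \<in> S" for x
  proof -
    have "c \<le> \<nu> x / \<mu> x" unfolding c_def using finite_states that by simp
    then show ?thesis using \<mu>_pos[OF that] by (simp add: \<sigma>_def pos_le_divide_eq mult.commute)
  qed
  have \<sigma>_null: "(\<Sum>x\<in>S. \<sigma> x * Q x x') = 0" if "x' \<in> S" for x'
    using \<mu>(3)[OF that] \<nu>(3)[OF that]
    by (simp add: \<sigma>_def left_diff_distrib sum_subtractf mult.assoc flip: sum_distrib_left)
  have "\<sigma> x1 = 0" using x1 \<mu>_pos[OF x1(1)] by (simp add: \<sigma>_def)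
  then have \<sigma>_zero: "\<sigma> x = 0" if "x \<in> S" for x
    using left_null_pos_along_transitions[OF \<sigma>_nonneg \<sigma>_null irreducible[OF that x1(1)]]
      \<sigma>_nonneg[OF that] by force
  then have "(\<Sum>x\<in>S. \<nu> x) = c * (\<Sum>x\<in>S. \<mu> x)"
    by (simp add: \<sigma>_def sum_distrib_left)
  then have "c = 1" using \<mu>(2) \<nu>(2) by simp
  then show ?thesis using \<sigma>_zero[OF \<open>x \<in> S\<close>] by (simp add: \<sigma>_def)
qed

end

definition invariant_law :: "'s set \<Rightarrow> ('s \<Rightarrow> 's \<Rightarrow> real) \<Rightarrow> 's pmf \<Rightarrow> bool" where
  "invariant_law S Q \<mu> \<longleftrightarrow> set_pmf \<mu> \<subseteq> S \<and>
     (\<forall>t\<ge>0. \<forall>x'\<in>S. (\<Sum>x\<in>S. pmf \<mu> x * mat_exp S Q t x x') = pmf \<mu> x')"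

lemma arg_invariant_iff_invariant_law:
  "arg_invariant \<rho> z \<mu> \<longleftrightarrow> invariant_law (partitions_of z) (arg_gen \<rho> z) \<mu>"
  by (simp add: arg_invariant_def invariant_law_def arg_trans_eq_mat_exp)

lemma pmf_of_probability_vector:
  assumes "finite S" "\<And>x. x \<in> S \<Longrightarrow> 0 \<le> f x" "(\<Sum>x\<in>S. f x) = 1"
  shows "\<exists>p. set_pmf p \<subseteq> S \<and> (\<forall>x\<in>S. pmf p x = f x)"
proof -
  define g where "g x = (if x \<in> S then f x else 0)" for x
  have g_nonneg: "0 \<le> g x" for x using assms(2) by (simp add: g_def)
  have "(\<integral>\<^sup>+x. ennreal (g x) \<partial>count_space UNIV) = ennreal (\<Sum>x\<in>S. g x)"
    using assms(1) g_nonneg by (subst nn_integral_count_space'[of S]) (auto simp: g_def assms(2))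
  then have "(\<integral>\<^sup>+x. ennreal (g x) \<partial>count_space UNIV) = 1"
    using assms(3) by (simp add: g_def)
  with g_nonneg have "pmf (embed_pmf g) x = g x" for x
    by (rule pmf_embed_pmf)
  then show ?thesis
    by (intro exI[of _ "embed_pmf g"]) (auto simp: set_pmf_iff g_def split: if_splits)
qed

context q_matrix
begin

lemma invariant_law_iff_left_null:
  "invariant_law S Q \<mu> \<longleftrightarrow> set_pmf \<mu> \<subseteq> S \<and> (\<forall>x'\<in>S. (\<Sum>x\<in>S. pmf \<mu> x * Q x x') = 0)"
proof
  assume "invariant_law S Q \<mu>"
  then have "set_pmf \<mu> \<subseteq> S"
    and "\<And>t x'. t > 0 \<Longrightarrow> x' \<in> S \<Longrightarrow> (\<Sum>x\<in>S. pmf \<mu> x * mat_exp S Q t x x') = pmf \<mu> x'"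
    by (auto simp: invariant_law_def)
  then show "set_pmf \<mu> \<subseteq> S \<and> (\<forall>x'\<in>S. (\<Sum>x\<in>S. pmf \<mu> x * Q x x') = 0)"
    using left_null_if_mat_exp_invariant[OF finite_states] by blast
next
  assume "set_pmf \<mu> \<subseteq> S \<and> (\<forall>x'\<in>S. (\<Sum>x\<in>S. pmf \<mu> x * Q x x') = 0)"
  then show "invariant_law S Q \<mu>"
    unfolding invariant_law_def using mat_exp_invariant_if_left_null by blast
qed

lemma ex1_invariant_law:
  assumes irreducible: "\<And>a b. a \<in> S \<Longrightarrow> b \<in> S \<Longrightarrow> (a, b) \<in> transitions\<^sup>*" and "S \<noteq> {}"
  shows "\<exists>!\<mu>. invariant_law S Q \<mu>"
proof -
  obtain f where f: "\<forall>x\<in>S. 0 \<le> f x" "(\<Sum>x\<in>S. f x) = 1"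
      "\<forall>x'\<in>S. (\<Sum>x\<in>S. f x * Q x x') = 0"
    using left_null_law_exists[OF \<open>S \<noteq> {}\<close>] by blast
  obtain \<mu> where \<mu>: "set_pmf \<mu> \<subseteq> S" "\<forall>x\<in>S. pmf \<mu> x = f x"
    using pmf_of_probability_vector[OF finite_states f(1)[rule_format] f(2)] by blast
  have "invariant_law S Q \<mu>"
    using \<mu> f(3) by (simp add: invariant_law_iff_left_null)
  moreover have "\<nu> = \<mu>" if "invariant_law S Q \<nu>" for \<nu>
  proof (rule pmf_eqI)
    fix x
    have \<nu>: "set_pmf \<nu> \<subseteq> S" "\<And>x'. x' \<in> S \<Longrightarrow> (\<Sum>x\<in>S. pmf \<nu> x * Q x x') = 0"
      using that by (auto simp: invariant_law_iff_left_null)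
    show "pmf \<nu> x = pmf \<mu> x"
    proof (cases "x \<in> S")
      case True
      then show ?thesis
        using left_null_law_unique[OF irreducible _ _ \<nu>(2) _ _ f(3)[rule_format], of x] f(1,2) \<mu>(2) \<nu>(1)
        by (simp add: sum_pmf_eq_1[OF finite_states])
    next
      case False
      then show ?thesis using \<mu>(1) \<nu>(1) by (metis set_pmf_iff subsetD)
    qed
  qed
  ultimately show ?thesis by blast
qed

end

section \<open>Lumpability\<close>

lemma pmf_map_pmf_eq_sum:
  assumes "finite S" "set_pmf \<pi> \<subseteq> S"
  shows "pmf (map_pmf R \<pi>) v = (\<Sum>x\<in>{x\<in>S. R x = v}. pmf \<pi> x)"
proof -
  have "pmf (map_pmf R \<pi>) v = measure \<pi> (R -` {v} \<inter> set_pmf \<pi>)"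
    by (simp add: pmf_map measure_Int_set_pmf)
  also have "R -` {v} \<inter> set_pmf \<pi> = {x\<in>S. R x = v} \<inter> set_pmf \<pi>"
    using assms(2) by auto
  also have "measure \<pi> \<dots> = (\<Sum>x\<in>{x\<in>S. R x = v}. pmf \<pi> x)"
    using assms(1) by (simp add: measure_Int_set_pmf measure_measure_pmf_finite)
  finally show ?thesis .
qed

lemma lumped_rates_if_off_diagonal:
  assumes "q_matrix S Q" "q_matrix T Q'" "R ` S \<subseteq> T"
    and off_diagonal: "\<And>x w. x \<in> S \<Longrightarrow> w \<in> T \<Longrightarrow> w \<noteq> R x \<Longrightarrow>
      (\<Sum>x'\<in>{x'\<in>S. R x' = w}. Q x x') = Q' (R x) w"
    and "x \<in> S" "w \<in> T"
  shows "(\<Sum>x'\<in>{x'\<in>S. R x' = w}. Q x x') = Q' (R x) w"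
proof (cases "w = R x")
  case True
  interpret source: q_matrix S Q by fact
  interpret target: q_matrix T Q' by fact
  have Rx: "R x \<in> T" using assms(3,5) by blast
  \<comment> \<open>on the diagonal both sides are determined by the zero row sums\<close>
  have "0 = (\<Sum>v\<in>T. \<Sum>x'\<in>{x'\<in>S. R x' = v}. Q x x')"
    using source.row_sum_eq_0[OF \<open>x \<in> S\<close>]
      sum.group[OF source.finite_states target.finite_states assms(3), of "Q x"] by simp
  also have "\<dots> = (\<Sum>x'\<in>{x'\<in>S. R x' = R x}. Q x x') + (\<Sum>v\<in>T - {R x}. Q' (R x) v)"
    using Rx target.finite_states off_diagonal[OF \<open>x \<in> S\<close>]
    by (simp add: sum.remove)
  finally have "0 = (\<Sum>x'\<in>{x'\<in>S. R x' = R x}. Q x x') + (\<Sum>v\<in>T - {R x}. Q' (R x) v)" .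
  moreover have "0 = Q' (R x) (R x) + (\<Sum>v\<in>T - {R x}. Q' (R x) v)"
    using target.row_sum_eq_0[OF Rx] Rx target.finite_states by (simp add: sum.remove)
  ultimately show ?thesis using True by simp
qed (use off_diagonal assms(5,6) in blast)

locale lumping =
  fixes S :: "'s set" and T :: "'t set" and R :: "'s \<Rightarrow> 't"
    and Q :: "'s \<Rightarrow> 's \<Rightarrow> real" and Q' :: "'t \<Rightarrow> 't \<Rightarrow> real"
  assumes finite_source: "finite S" and finite_target: "finite T"
    and maps_into: "R ` S \<subseteq> T"
    and lumped_rates: "\<And>x w. x \<in> S \<Longrightarrow> w \<in> T \<Longrightarrow> (\<Sum>x'\<in>{x'\<in>S. R x' = w}. Q x x') = Q' (R x) w"
    and no_exit: "\<And>v w. v \<in> T \<Longrightarrow> w \<notin> T \<Longrightarrow> Q' v w = 0"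
begin

lemma lumped_mat_pow:
  assumes "x \<in> S" "w \<in> T"
  shows "(\<Sum>x'\<in>{x'\<in>S. R x' = w}. mat_pow S Q n x x') = mat_pow T Q' n (R x) w"
  using assms(2)
proof (induction n arbitrary: w)
  case 0
  show ?case using \<open>x \<in> S\<close> finite_source by (simp add: sum.delta'[where S = "{x'\<in>S. R x' = w}"])
next
  case (Suc n)
  have "(\<Sum>x'\<in>{x'\<in>S. R x' = w}. mat_pow S Q (Suc n) x x')
      = (\<Sum>u\<in>S. mat_pow S Q n x u * (\<Sum>x'\<in>{x'\<in>S. R x' = w}. Q u x'))"
    unfolding mat_pow_Suc_apply sum_distrib_left by (rule sum.swap)
  also have "\<dots> = (\<Sum>u\<in>S. mat_pow S Q n x u * Q' (R u) w)"
    using lumped_rates Suc.prems by simp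
  also have "\<dots> = (\<Sum>v\<in>T. \<Sum>u\<in>{u\<in>S. R u = v}. mat_pow S Q n x u * Q' (R u) w)"
    by (rule sum.group[OF finite_source finite_target maps_into, symmetric])
  also have "\<dots> = (\<Sum>v\<in>T. mat_pow T Q' n (R x) v * Q' v w)"
    by (intro sum.cong refl) (auto simp: Suc.IH sum_distrib_right[symmetric])
  finally show ?case by (simp add: mat_pow_Suc_apply)
qed

lemma lumped_mat_exp:
  assumes "x \<in> S" "w \<in> T"
  shows "(\<Sum>x'\<in>{x'\<in>S. R x' = w}. mat_exp S Q t x x') = mat_exp T Q' t (R x) w"
proof -
  have "(\<Sum>x'\<in>{x'\<in>S. R x' = w}. mat_exp S Q t x x')
      = (\<Sum>n. \<Sum>x'\<in>{x'\<in>S. R x' = w}. t ^ n / fact n * mat_pow S Q n x x')"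
    unfolding mat_exp_def
    by (rule suminf_sum[symmetric]) (rule summable_mat_exp[OF finite_source], simp)
  also have "\<dots> = (\<Sum>n. t ^ n / fact n * mat_pow T Q' n (R x) w)"
    by (simp only: sum_distrib_left[symmetric] lumped_mat_pow[OF assms])
  finally show ?thesis unfolding mat_exp_def .
qed

lemma mat_exp_eq_0_outside:
  assumes "v \<in> T" "w \<notin> T"
  shows "mat_exp T Q' t v w = 0"
  using assms no_exit by (intro mat_exp_eq_0_if_column_eq_0) auto

lemma lumped_path_prob:
  assumes "x \<in> S"
  shows "(\<Sum>xs\<in>{xs. length xs = length ts \<and> set xs \<subseteq> S \<and> map R xs = ws}. path_prob (mat_exp S Q) x t0 ts xs)
         = path_prob (mat_exp T Q') (R x) t0 ts ws"
  using assms
proof (induction ts arbitrary: ws x t0)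
  case Nil
  have "{xs. length xs = 0 \<and> set xs \<subseteq> S \<and> map R xs = ws} = (if ws = [] then {[]} else {})"
    by auto
  then show ?case by (cases ws) auto
next
  case (Cons t ts)
  show ?case
  proof (cases ws)
    case (Cons w ws')
    define L where "L = {xs. length xs = length ts \<and> set xs \<subseteq> S \<and> map R xs = ws'}"
    have paths: "{xs. length xs = length (t # ts) \<and> set xs \<subseteq> S \<and> map R xs = ws}
        = (\<lambda>(x, xs). x # xs) ` ({x\<in>S. R x = w} \<times> L)"
      unfolding Cons L_def by (auto simp: length_Suc_conv image_iff)
    have "inj_on (\<lambda>(x, xs). x # xs) ({x\<in>S. R x = w} \<times> L)"
      by (auto simp: inj_on_def)
    then have "(\<Sum>xs\<in>{xs. length xs = length (t # ts) \<and> set xs \<subseteq> S \<and> map R xs = ws}.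
          path_prob (mat_exp S Q) x t0 (t # ts) xs)
        = (\<Sum>(x', xs)\<in>{x'\<in>S. R x' = w} \<times> L. path_prob (mat_exp S Q) x t0 (t # ts) (x' # xs))"
      unfolding paths by (subst sum.reindex) (simp_all add: case_prod_unfold)
    also have "\<dots> = (\<Sum>x'\<in>{x'\<in>S. R x' = w}. \<Sum>xs\<in>L. mat_exp S Q (t - t0) x x' * path_prob (mat_exp S Q) x' t ts xs)"
      by (subst sum.cartesian_product[symmetric]) simp
    also have "\<dots> = (\<Sum>x'\<in>{x'\<in>S. R x' = w}. mat_exp S Q (t - t0) x x') * path_prob (mat_exp T Q') w t ts ws'"
      by (auto simp: sum_distrib_left[symmetric] sum_distrib_right L_def Cons.IH intro!: sum.cong)
    also have "\<dots> = path_prob (mat_exp T Q') (R x) t0 (t # ts) ws"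
    proof (cases "w \<in> T")
      case True
      then show ?thesis unfolding Cons by (simp add: lumped_mat_exp[OF Cons.prems])
    next
      case False
      then have no_preimage: "{x'\<in>S. R x' = w} = {}" using maps_into by auto
      have "mat_exp T Q' (t - t0) (R x) w = 0"
        using mat_exp_eq_0_outside False maps_into Cons.prems by blast
      then show ?thesis unfolding Cons no_preimage by simp
    qed
    finally show ?thesis .
  qed simp
qed

lemma lumped_path_law:
  assumes "set_pmf \<pi> \<subseteq> S"
  shows "(\<Sum>v\<in>T. pmf (map_pmf R \<pi>) v * path_prob (mat_exp T Q') v t0 ts ws)
    = (\<Sum>xs\<in>{xs. length xs = length ts \<and> set xs \<subseteq> S \<and> map R xs = ws}.
         \<Sum>x\<in>S. pmf \<pi> x * path_prob (mat_exp S Q) x t0 ts xs)"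
proof -
  have "(\<Sum>v\<in>T. pmf (map_pmf R \<pi>) v * path_prob (mat_exp T Q') v t0 ts ws)
      = (\<Sum>v\<in>T. \<Sum>x\<in>{x\<in>S. R x = v}. pmf \<pi> x * path_prob (mat_exp T Q') (R x) t0 ts ws)"
    by (simp add: pmf_map_pmf_eq_sum[OF finite_source assms] sum_distrib_right)
  also have "\<dots> = (\<Sum>x\<in>S. pmf \<pi> x * path_prob (mat_exp T Q') (R x) t0 ts ws)"
    by (rule sum.group[OF finite_source finite_target maps_into])
  also have "\<dots> = (\<Sum>x\<in>S. \<Sum>xs\<in>{xs. length xs = length ts \<and> set xs \<subseteq> S \<and> map R xs = ws}.
      pmf \<pi> x * path_prob (mat_exp S Q) x t0 ts xs)"
    by (intro sum.cong refl) (simp add: lumped_path_prob flip: sum_distrib_left)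
  finally show ?thesis by (simp only: sum.swap[of _ S])
qed

lemma invariant_law_map:
  assumes "invariant_law S Q \<mu>"
  shows "invariant_law T Q' (map_pmf R \<mu>)"
  unfolding invariant_law_def
proof (intro conjI allI impI ballI)
  have support: "set_pmf \<mu> \<subseteq> S" using assms by (simp add: invariant_law_def)
  then show "set_pmf (map_pmf R \<mu>) \<subseteq> T" using maps_into by auto
  fix t :: real and w assume "0 \<le> t" "w \<in> T"
  have "(\<Sum>v\<in>T. pmf (map_pmf R \<mu>) v * mat_exp T Q' t v w)
      = (\<Sum>v\<in>T. \<Sum>x\<in>{x\<in>S. R x = v}. pmf \<mu> x * mat_exp T Q' t (R x) w)"
    by (simp add: pmf_map_pmf_eq_sum[OF finite_source support] sum_distrib_right)
  also have "\<dots> = (\<Sum>x\<in>S. pmf \<mu> x * mat_exp T Q' t (R x) w)"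
    by (rule sum.group[OF finite_source finite_target maps_into])
  also have "\<dots> = (\<Sum>x\<in>S. \<Sum>x'\<in>{x'\<in>S. R x' = w}. pmf \<mu> x * mat_exp S Q t x x')"
    using \<open>w \<in> T\<close> by (intro sum.cong refl) (simp add: lumped_mat_exp flip: sum_distrib_left)
  also have "\<dots> = (\<Sum>x'\<in>{x'\<in>S. R x' = w}. \<Sum>x\<in>S. pmf \<mu> x * mat_exp S Q t x x')"
    by (rule sum.swap)
  also have "\<dots> = (\<Sum>x'\<in>{x'\<in>S. R x' = w}. pmf \<mu> x')"
    using assms \<open>0 \<le> t\<close> unfolding invariant_law_def by (intro sum.cong refl) auto
  also have "\<dots> = pmf (map_pmf R \<mu>) w"
    by (simp add: pmf_map_pmf_eq_sum[OF finite_source support])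
  finally show "(\<Sum>v\<in>T. pmf (map_pmf R \<mu>) v * mat_exp T Q' t v w) = pmf (map_pmf R \<mu>) w" .
qed

end

section \<open>Partitions and their restrictions\<close>

lemma mem_partitions_of [simp]: "P \<in> partitions_of z \<longleftrightarrow> partition_on z P"
  by (simp add: partitions_of_def)

lemma finite_partitions_of: "finite z \<Longrightarrow> finite (partitions_of z)"
  by (simp add: partitions_of_def finitely_many_partition_on)

lemma singletons_in_partitions_of: "(\<lambda>a. {a}) ` z \<in> partitions_of z"
  by (simp add: partition_on_singletons)

lemma Rest_in_partitions_of:
  assumes "y \<subseteq> z" "P \<in> partitions_of z"
  shows "Rest y P \<in> partitions_of y"
proof -
  have "partition_on (y \<inter> z) ((\<inter>) y ` P - {{}})"
    using assms by (intro partition_on_restrict) simp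
  moreover have "(\<inter>) y ` P = (\<lambda>B. B \<inter> y) ` P" by (auto simp: Int_commute)
  ultimately show ?thesis using assms(1) by (simp add: Rest_def Int_absorb2)
qed

lemma mem_Rest: "A' \<in> Rest y P \<longleftrightarrow> (\<exists>A\<in>P. A' = A \<inter> y) \<and> A' \<noteq> {}"
  by (auto simp: Rest_def)

lemma partition_on_block_unique:
  assumes "partition_on z P" "A \<in> P" "B \<in> P" "x \<in> A" "x \<in> B"
  shows "A = B"
  using assms partition_onD2[OF assms(1)] by (auto simp: disjoint_def)

lemma partition_on_finite_block:
  assumes "finite z" "partition_on z P" "A \<in> P"
  shows "finite A"
proof -
  have "A \<subseteq> \<Union>P" using assms(3) by (rule Union_upper)
  then show ?thesis using partition_onD1[OF assms(2)] finite_subset[OF _ assms(1)] by simp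
qed

lemma inj_on_Int_blocks:
  assumes "partition_on z P"
  shows "inj_on (\<lambda>C. C \<inter> y) {C\<in>P. C \<inter> y \<noteq> {}}"
proof (rule inj_onI)
  fix A B assume "A \<in> {C\<in>P. C \<inter> y \<noteq> {}}" "B \<in> {C\<in>P. C \<inter> y \<noteq> {}}" "A \<inter> y = B \<inter> y"
  then obtain x where "x \<in> A" "x \<in> B" "A \<in> P" "B \<in> P" by blast
  then show "A = B" using partition_on_block_unique[OF assms] by blast
qed

lemma partition_on_replace_block:
  assumes P: "partition_on z P" and A: "A \<in> P"
    and XY: "X \<union> Y = A" "X \<inter> Y = {}" "X \<noteq> {}" "Y \<noteq> {}"
  shows "partition_on z (insert X (insert Y (P - {A})))"
proof (rule partition_onI)
  show "\<Union>(insert X (insert Y (P - {A}))) = z"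
    using partition_onD1[OF P] A XY(1) by auto
  show "{} \<notin> insert X (insert Y (P - {A}))"
    using partition_onD3[OF P] XY(3,4) by auto
  have XY_sub: "X \<subseteq> A" "Y \<subseteq> A" using XY(1) by auto
  have other: "disjnt A C" if "C \<in> P - {A}" for C
    using partition_onD2[OF P] A that by (auto simp: disjoint_def disjnt_def)
  fix C D assume "C \<in> insert X (insert Y (P - {A}))" "D \<in> insert X (insert Y (P - {A}))" "C \<noteq> D"
  then consider "C \<in> {X, Y}" "D \<in> {X, Y}" | "C \<in> {X, Y}" "D \<in> P - {A}"
    | "C \<in> P - {A}" "D \<in> {X, Y}" | "C \<in> P - {A}" "D \<in> P - {A}"
    by blast
  then show "disjnt C D"
  proof cases
    case 1
    then show ?thesis using \<open>C \<noteq> D\<close> XY(2) by (auto simp: disjnt_def)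
  next
    case 2
    then show ?thesis using other XY_sub by (auto intro: disjnt_subset1)
  next
    case 3
    then show ?thesis using disjnt_subset2[OF disjnt_sym[OF other[OF 3(1)]]] XY_sub by auto
  next
    case 4
    then show ?thesis using partition_onD2[OF P] \<open>C \<noteq> D\<close> by (auto simp: disjoint_def disjnt_def)
  qed
qed

lemma card_partition_on_le:
  assumes "finite z" "partition_on z P"
  shows "card P \<le> card z"
proof -
  have "card P = (\<Sum>A\<in>P. 1)" by simp
  also have "\<dots> \<le> (\<Sum>A\<in>P. card A)"
    using assms partition_onD3[OF assms(2)] partition_on_finite_block[OF assms]
    by (intro sum_mono) (metis One_nat_def Suc_leI card_gt_0_iff)
  also have "\<dots> = card z"
    using product_partition[OF assms(2)] partition_on_finite_block[OF assms] by simp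
  finally show ?thesis .
qed

lemma partition_on_eq_singletons:
  assumes "partition_on z P" and "\<And>A a b. A \<in> P \<Longrightarrow> a \<in> A \<Longrightarrow> b \<in> A \<Longrightarrow> a = b"
  shows "P = (\<lambda>a. {a}) ` z"
proof (intro equalityI subsetI)
  fix X assume X: "X \<in> P"
  then have "X \<noteq> {}" using partition_onD3[OF assms(1)] by blast
  then obtain a where a: "a \<in> X" by blast
  then have "X = {a}" using assms(2)[OF X] by blast
  moreover have "a \<in> z" using partition_onD1[OF assms(1)] X a by auto
  ultimately show "X \<in> (\<lambda>a. {a}) ` z" by blast
next
  fix X assume "X \<in> (\<lambda>a. {a}) ` z"
  then obtain a where a: "a \<in> z" "X = {a}" by blast
  then obtain B where B: "B \<in> P" "a \<in> B" using partition_onD1[OF assms(1)] by auto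
  then have "B = {a}" using assms(2)[OF B(1)] by blast
  then show "X \<in> P" using B(1) a(2) by simp
qed

lemma sum_group_filter:
  assumes "finite X" "finite S" "f ` X \<subseteq> S"
  shows "(\<Sum>s\<in>{s\<in>S. h s = w}. \<Sum>x\<in>{x\<in>X. f x = s}. g x) = (\<Sum>x\<in>{x\<in>X. h (f x) = w}. g x)"
proof -
  have "(\<Sum>s\<in>{s\<in>S. h s = w}. \<Sum>x\<in>{x\<in>X. f x = s}. g x)
      = (\<Sum>s\<in>{s\<in>S. h s = w}. \<Sum>x\<in>{x\<in>{x\<in>X. h (f x) = w}. f x = s}. g x)"
    by (intro sum.cong refl) auto
  also have "\<dots> = (\<Sum>x\<in>{x\<in>X. h (f x) = w}. g x)"
    by (rule sum.group) (use assms in auto)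
  finally show ?thesis .
qed

section \<open>Merging blocks\<close>

definition block_pairs :: "'a set set \<Rightarrow> 'a set set set" where
  "block_pairs P = {{A, B} | A B. A \<in> P \<and> B \<in> P \<and> A \<noteq> B}"

definition merge_blocks :: "'a set set \<Rightarrow> 'a set set \<Rightarrow> 'a set set" where
  "merge_blocks P p = insert (\<Union>p) (P - p)"

lemma finite_block_pairs: "finite P \<Longrightarrow> finite (block_pairs P)"
  by (rule finite_subset[of _ "Pow P"]) (auto simp: block_pairs_def)

lemma merge_rate_eq_card: "merge_rate P P' = real (card {p\<in>block_pairs P. merge_blocks P p = P'})"
proof -
  have "{{A, B} | A B. A \<in> P \<and> B \<in> P \<and> A \<noteq> B \<and> P' = insert (A \<union> B) (P - {A, B})}
        = {p\<in>block_pairs P. merge_blocks P p = P'}"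
    unfolding block_pairs_def merge_blocks_def by auto
  then show ?thesis by (simp add: merge_rate_def)
qed

lemma merge_blocks_in_partitions_of:
  assumes P: "partition_on z P" and "p \<in> block_pairs P"
  shows "merge_blocks P p \<in> partitions_of z"
proof -
  obtain A B where p: "p = {A, B}" "A \<in> P" "B \<in> P" "A \<noteq> B"
    using assms(2) by (auto simp: block_pairs_def)
  have "partition_on z (insert (A \<union> B) (P - {A, B}))"
  proof (rule partition_onI)
    show "\<Union>(insert (A \<union> B) (P - {A, B})) = z"
      using partition_onD1[OF P] p by auto
    show "{} \<notin> insert (A \<union> B) (P - {A, B})"
      using partition_onD3[OF P] p by auto
    have apart: "disjnt (A \<union> B) D" if "D \<in> P - {A, B}" for D
      using disjointD[OF partition_onD2[OF P], of A D] disjointD[OF partition_onD2[OF P], of B D] p that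
      by (auto simp: disjnt_def)
    fix C D assume "C \<in> insert (A \<union> B) (P - {A, B})" "D \<in> insert (A \<union> B) (P - {A, B})" "C \<noteq> D"
    then consider "C = A \<union> B" "D \<in> P - {A, B}" | "C \<in> P - {A, B}" "D = A \<union> B"
      | "C \<in> P - {A, B}" "D \<in> P - {A, B}"
      by blast
    then show "disjnt C D"
    proof cases
      case 1
      then show ?thesis using apart by simp
    next
      case 2
      then show ?thesis using apart disjnt_sym by metis
    next
      case 3
      then show ?thesis using partition_onD2[OF P] \<open>C \<noteq> D\<close> by (auto simp: disjoint_def disjnt_def)
    qed
  qed
  then show ?thesis by (simp add: merge_blocks_def p)
qed

lemma Rest_merge_blocks_if_disjoint:
  assumes "A \<in> P" "B \<in> P" "A \<inter> y = {}"
  shows "Rest y (merge_blocks P {A, B}) = Rest y P"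
  using assms unfolding Rest_def merge_blocks_def by auto

lemma Rest_merge_blocks:
  assumes P: "partition_on z P" and "A \<in> P" "B \<in> P" "A \<noteq> B" "A \<inter> y \<noteq> {}" "B \<inter> y \<noteq> {}"
  shows "Rest y (merge_blocks P {A, B}) = merge_blocks (Rest y P) {A \<inter> y, B \<inter> y}"
    and "{A \<inter> y, B \<inter> y} \<in> block_pairs (Rest y P)"
proof -
  have inj: "C = D" if "C \<inter> y = D \<inter> y" "C \<in> P" "D \<in> P" "C \<inter> y \<noteq> {}" for C D
    using inj_on_Int_blocks[OF P, of y] that unfolding inj_on_def by blast
  then have "A \<inter> y \<noteq> B \<inter> y" using assms by blast
  then show "{A \<inter> y, B \<inter> y} \<in> block_pairs (Rest y P)"
    unfolding block_pairs_def using assms by (auto simp: Rest_def)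
  show "Rest y (merge_blocks P {A, B}) = merge_blocks (Rest y P) {A \<inter> y, B \<inter> y}"
    unfolding Rest_def merge_blocks_def using inj assms by (auto 4 3)
qed

lemma merge_seen_on_Rest:
  assumes "p \<in> block_pairs P" "Rest y (merge_blocks P p) \<noteq> Rest y P"
  obtains A B where "p = {A, B}" "A \<in> P" "B \<in> P" "A \<noteq> B" "A \<inter> y \<noteq> {}" "B \<inter> y \<noteq> {}"
proof -
  obtain A B where p: "p = {A, B}" "A \<in> P" "B \<in> P" "A \<noteq> B"
    using assms(1) by (auto simp: block_pairs_def)
  have "A \<inter> y \<noteq> {}"
    using Rest_merge_blocks_if_disjoint[OF p(2,3)] assms(2) p(1) by auto
  moreover have "B \<inter> y \<noteq> {}"
    using Rest_merge_blocks_if_disjoint[OF p(3,2)] assms(2) p(1) by (auto simp: insert_commute)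
  ultimately show ?thesis by (rule that[OF p])
qed

lemma bij_betw_merges_Rest:
  assumes P: "partition_on z P" and w: "w \<noteq> Rest y P"
  shows "bij_betw ((`) (\<lambda>C. C \<inter> y))
    {p\<in>block_pairs P. Rest y (merge_blocks P p) = w} {p\<in>block_pairs (Rest y P). merge_blocks (Rest y P) p = w}"
    (is "bij_betw _ ?L ?R")
proof (rule bij_betw_imageI)
  have "?L \<subseteq> Pow {C\<in>P. C \<inter> y \<noteq> {}}"
  proof
    fix p assume "p \<in> ?L"
    then have "p \<in> block_pairs P" "Rest y (merge_blocks P p) \<noteq> Rest y P" using w by auto
    then obtain A B where "p = {A, B}" "A \<in> P" "B \<in> P" "A \<inter> y \<noteq> {}" "B \<inter> y \<noteq> {}"
      by (rule merge_seen_on_Rest)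
    then show "p \<in> Pow {C\<in>P. C \<inter> y \<noteq> {}}" by simp
  qed
  then show "inj_on ((`) (\<lambda>C. C \<inter> y)) ?L"
    by (rule inj_on_subset[OF inj_on_image_Pow[OF inj_on_Int_blocks[OF P]]])
  show "(`) (\<lambda>C. C \<inter> y) ` ?L = ?R"
  proof (intro equalityI subsetI)
    fix q assume "q \<in> (`) (\<lambda>C. C \<inter> y) ` ?L"
    then obtain p where p: "p \<in> ?L" "q = (\<lambda>C. C \<inter> y) ` p" by blast
    then have "p \<in> block_pairs P" "Rest y (merge_blocks P p) \<noteq> Rest y P" using w by auto
    then obtain A B where AB: "p = {A, B}" "A \<in> P" "B \<in> P" "A \<noteq> B" "A \<inter> y \<noteq> {}" "B \<inter> y \<noteq> {}"
      by (rule merge_seen_on_Rest)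
    have "Rest y (merge_blocks P {A, B}) = w" using p(1) AB(1) by simp
    then have "merge_blocks (Rest y P) {A \<inter> y, B \<inter> y} = w"
      unfolding Rest_merge_blocks(1)[OF P AB(2-6)] .
    then show "q \<in> ?R" using Rest_merge_blocks(2)[OF P AB(2-6)] p(2) AB(1) by simp
  next
    fix q assume q: "q \<in> ?R"
    then obtain A' B' where q': "q = {A', B'}" "A' \<in> Rest y P" "B' \<in> Rest y P" "A' \<noteq> B'"
      by (auto simp: block_pairs_def)
    obtain A where A: "A \<in> P" "A' = A \<inter> y" "A' \<noteq> {}" using q'(2) unfolding mem_Rest by auto
    obtain B where B: "B \<in> P" "B' = B \<inter> y" "B' \<noteq> {}" using q'(3) unfolding mem_Rest by auto
    have AB: "q = {A \<inter> y, B \<inter> y}" "A \<in> P" "B \<in> P" "A \<noteq> B" "A \<inter> y \<noteq> {}" "B \<inter> y \<noteq> {}"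
      using q' A B by auto
    have "{A, B} \<in> block_pairs P" unfolding block_pairs_def using AB(2-4) by blast
    moreover have "Rest y (merge_blocks P {A, B}) = w"
      using q AB(1) unfolding Rest_merge_blocks(1)[OF P AB(2-6)] by simp
    ultimately have "{A, B} \<in> ?L" by simp
    then show "q \<in> (`) (\<lambda>C. C \<inter> y) ` ?L" by (rule image_eqI[rotated]) (simp add: AB(1))
  qed
qed

lemma merge_rates_lumped:
  assumes "finite z" "P \<in> partitions_of z" "w \<noteq> Rest y P"
  shows "(\<Sum>P'\<in>{P'\<in>partitions_of z. Rest y P' = w}. merge_rate P P') = merge_rate (Rest y P) w"
proof -
  have P: "partition_on z P" using assms(2) by simp
  have "(\<Sum>P'\<in>{P'\<in>partitions_of z. Rest y P' = w}. merge_rate P P')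
      = (\<Sum>P'\<in>{P'\<in>partitions_of z. Rest y P' = w}. \<Sum>p\<in>{p\<in>block_pairs P. merge_blocks P p = P'}. 1)"
    by (simp add: merge_rate_eq_card)
  also have "\<dots> = (\<Sum>p\<in>{p\<in>block_pairs P. Rest y (merge_blocks P p) = w}. 1)"
    using finite_block_pairs[OF finite_elements[OF assms(1) P]] finite_partitions_of[OF assms(1)]
      merge_blocks_in_partitions_of[OF P]
    by (intro sum_group_filter) auto
  also have "\<dots> = card {p\<in>block_pairs (Rest y P). merge_blocks (Rest y P) p = w}"
    using bij_betw_same_card[OF bij_betw_merges_Rest[OF P assms(3)]] by simp
  finally show ?thesis by (simp add: merge_rate_eq_card)
qed

section \<open>Splitting blocks\<close>

definition consecutive_pairs :: "'a::linorder set \<Rightarrow> ('a \<times> 'a) set" where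
  "consecutive_pairs C = {(a, b). a \<in> C \<and> b \<in> C \<and> a < b \<and> \<not> (\<exists>c\<in>C. a < c \<and> c < b)}"

lemma finite_consecutive_pairs: "finite C \<Longrightarrow> finite (consecutive_pairs C)"
  by (rule finite_subset[of _ "C \<times> C"]) (auto simp: consecutive_pairs_def)

lemma consecutive_pairs_insert_Max:
  fixes C :: "'a::linorder set"
  assumes "finite C" "C \<noteq> {}" "\<forall>c\<in>C. c < b"
  shows "consecutive_pairs (insert b C) = insert (Max C, b) (consecutive_pairs C)"
proof (intro equalityI subsetI)
  have Max: "Max C \<in> C" "\<And>c. c \<in> C \<Longrightarrow> c \<le> Max C" using assms(1,2) by auto
  fix p assume "p \<in> consecutive_pairs (insert b C)"
  then obtain u v where p: "p = (u, v)" "u \<in> insert b C" "v \<in> insert b C" "u < v"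
    and between: "\<And>c. c \<in> insert b C \<Longrightarrow> u < c \<Longrightarrow> c < v \<Longrightarrow> False"
    unfolding consecutive_pairs_def by blast
  have "u \<in> C" using p(2-4) assms(3) by auto
  show "p \<in> insert (Max C, b) (consecutive_pairs C)"
  proof (cases "v = b")
    case True
    then have "u = Max C"
      using between[of "Max C"] Max \<open>u \<in> C\<close> assms(3) by (meson antisym insertI2 not_le)
    then show ?thesis using p(1) True by simp
  next
    case False
    then show ?thesis
      using p \<open>u \<in> C\<close> between unfolding consecutive_pairs_def by auto
  qed
next
  have Max: "Max C \<in> C" "\<And>c. c \<in> C \<Longrightarrow> c \<le> Max C" using assms(1,2) by auto
  fix p assume "p \<in> insert (Max C, b) (consecutive_pairs C)"
  then show "p \<in> consecutive_pairs (insert b C)"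
  proof
    assume "p = (Max C, b)"
    then show ?thesis using Max assms(3) unfolding consecutive_pairs_def by (auto simp: not_less)
  next
    assume "p \<in> consecutive_pairs C"
    then show ?thesis using assms(3) unfolding consecutive_pairs_def by (auto simp: not_less)
  qed
qed

lemma sum_consecutive_pairs_gaps:
  fixes C :: "'a::linordered_ab_group_add set"
  assumes "finite C" "C \<noteq> {}"
  shows "(\<Sum>(a, b)\<in>consecutive_pairs C. b - a) = Max C - Min C"
  using assms
proof (induction C rule: finite_linorder_max_induct)
  case (insert b C)
  show ?case
  proof (cases "C = {}")
    case True
    have "consecutive_pairs {b} = {}" by (auto simp: consecutive_pairs_def)
    then show ?thesis using True by simp
  next
    case False
    have "(Max C, b) \<notin> consecutive_pairs C"
      using insert.hyps(2) by (auto simp: consecutive_pairs_def)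
    then have "(\<Sum>(a, b)\<in>consecutive_pairs (insert b C). b - a) = (b - Max C) + (Max C - Min C)"
      using consecutive_pairs_insert_Max[OF insert.hyps(1) False insert.hyps(2)]
        finite_consecutive_pairs[OF insert.hyps(1)] insert.IH[OF False] by simp
    moreover have "Max (insert b C) = b"
      by (rule Max_eqI) (use insert.hyps(1,2) in \<open>auto intro: less_imp_le\<close>)
    moreover have "Min C \<le> b"
      using Min_in[OF insert.hyps(1) False] insert.hyps(2) less_imp_le by blast
    then have "Min (insert b C) = Min C"
      unfolding Min_insert[OF insert.hyps(1) False] by (rule min.absorb2)
    ultimately show ?thesis by simp
  qed
qed simp

definition cuts :: "'a::linorder set set \<Rightarrow> ('a set \<times> 'a \<times> 'a) set" where
  "cuts P = {(A, a, b). A \<in> P \<and> (a, b) \<in> consecutive_pairs A}"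

definition split_block :: "'a::linorder set set \<Rightarrow> 'a set \<times> 'a \<times> 'a \<Rightarrow> 'a set set" where
  "split_block P = (\<lambda>(A, a, b). insert {x\<in>A. x \<le> a} (insert {x\<in>A. b \<le> x} (P - {A})))"

lemma split_rate_eq_sum:
  "split_rate \<rho> P P' = (\<Sum>(A, a, b)\<in>{t\<in>cuts P. split_block P t = P'}. \<rho> * (b - a))"
proof -
  have "{(A, a, b). A \<in> P \<and> a \<in> A \<and> b \<in> A \<and> a < b \<and> \<not> (\<exists>c\<in>A. a < c \<and> c < b) \<and>
        P' = insert {x\<in>A. x \<le> a} (insert {x\<in>A. b \<le> x} (P - {A}))} = {t\<in>cuts P. split_block P t = P'}"
    by (auto simp: cuts_def consecutive_pairs_def split_block_def)
  then show ?thesis by (simp add: split_rate_def)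
qed

lemma cutsD:
  assumes "(A, a, b) \<in> cuts P"
  shows "A \<in> P" "a \<in> A" "b \<in> A" "a < b" "\<And>c. c \<in> A \<Longrightarrow> c \<le> a \<or> b \<le> c"
  using assms by (auto simp: cuts_def consecutive_pairs_def not_less)

lemma finite_cuts:
  assumes "finite z" "partition_on z P"
  shows "finite (cuts P)"
proof (rule finite_subset)
  show "cuts P \<subseteq> P \<times> z \<times> z"
    using partition_onD1[OF assms(2)] by (auto simp: cuts_def consecutive_pairs_def)
  show "finite (P \<times> z \<times> z)" using assms finite_elements by auto
qed

lemma split_block_in_partitions_of:
  assumes "partition_on z P" "t \<in> cuts P"
  shows "split_block P t \<in> partitions_of z"
proof -
  obtain A a b where t: "t = (A, a, b)" by (cases t)
  note cut = cutsD[OF assms(2)[unfolded t]]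
  have "partition_on z (insert {x\<in>A. x \<le> a} (insert {x\<in>A. b \<le> x} (P - {A})))"
  proof (rule partition_on_replace_block[OF assms(1) cut(1)])
    show "{x\<in>A. x \<le> a} \<union> {x\<in>A. b \<le> x} = A" using cut(5) by auto
    show "{x\<in>A. x \<le> a} \<inter> {x\<in>A. b \<le> x} = {}" using cut(4) by auto
    show "{x\<in>A. x \<le> a} \<noteq> {}" "{x\<in>A. b \<le> x} \<noteq> {}" using cut(2,3) by auto
  qed
  then show ?thesis by (simp add: split_block_def t)
qed

text \<open>A cut of a block \<open>A\<close> is visible on \<open>y\<close> iff it separates two points of \<open>A \<inter> y\<close>; it is then
  seen as the cut of \<open>A \<inter> y\<close> between the nearest such points.\<close>

definition separates :: "'a::linorder set \<Rightarrow> 'a set \<times> 'a \<times> 'a \<Rightarrow> bool" where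
  "separates y = (\<lambda>(A, a, b). (\<exists>c\<in>A \<inter> y. c \<le> a) \<and> (\<exists>c\<in>A \<inter> y. b \<le> c))"

definition Rest_cut :: "'a::linorder set \<Rightarrow> 'a set \<times> 'a \<times> 'a \<Rightarrow> 'a set \<times> 'a \<times> 'a" where
  "Rest_cut y = (\<lambda>(A, a, b). (A \<inter> y, Max {c\<in>A \<inter> y. c \<le> a}, Min {c\<in>A \<inter> y. b \<le> c}))"

lemma Rest_split_block_if_not_separates:
  assumes "t \<in> cuts P" "\<not> separates y t"
  shows "Rest y (split_block P t) = Rest y P"
proof -
  obtain A a b where t: "t = (A, a, b)" by (cases t)
  note cut = cutsD[OF assms(1)[unfolded t]]
  have Rest_P: "Rest y P = insert (A \<inter> y) ((\<lambda>B. B \<inter> y) ` (P - {A})) - {{}}"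
    unfolding Rest_def using cut(1) by (metis image_insert insert_Diff)
  have "{x\<in>A. x \<le> a} \<inter> y = {} \<and> {x\<in>A. b \<le> x} \<inter> y = A \<inter> y
      \<or> {x\<in>A. x \<le> a} \<inter> y = A \<inter> y \<and> {x\<in>A. b \<le> x} \<inter> y = {}"
    using assms(2) cut(5) by (auto simp: t separates_def)
  then show ?thesis
    unfolding Rest_P by (auto simp: Rest_def split_block_def t)
qed

lemma Rest_cut_bounds:
  assumes "finite A" "separates y (A, a, b)"
  obtains a' b' where "Rest_cut y (A, a, b) = (A \<inter> y, a', b')"
    "a' \<in> A \<inter> y" "a' \<le> a" "\<And>c. c \<in> A \<inter> y \<Longrightarrow> c \<le> a \<Longrightarrow> c \<le> a'"
    "b' \<in> A \<inter> y" "b \<le> b'" "\<And>c. c \<in> A \<inter> y \<Longrightarrow> b \<le> c \<Longrightarrow> b' \<le> c"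
proof -
  define L U where "L = {c\<in>A \<inter> y. c \<le> a}" and "U = {c\<in>A \<inter> y. b \<le> c}"
  have "finite L" "finite U" "L \<noteq> {}" "U \<noteq> {}"
    using assms by (auto simp: L_def U_def separates_def)
  then have "Max L \<in> L" "Min U \<in> U" "\<And>c. c \<in> L \<Longrightarrow> c \<le> Max L" "\<And>c. c \<in> U \<Longrightarrow> Min U \<le> c"
    by auto
  moreover have "Rest_cut y (A, a, b) = (A \<inter> y, Max L, Min U)"
    by (simp add: Rest_cut_def L_def U_def)
  ultimately show ?thesis
    by (intro that[of "Max L" "Min U"]) (auto simp: L_def U_def)
qed

lemma Rest_cut_in_cuts:
  assumes "finite z" "partition_on z P" "t \<in> cuts P" "separates y t"
  shows "Rest_cut y t \<in> cuts (Rest y P)"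
    and "Rest y (split_block P t) = split_block (Rest y P) (Rest_cut y t)"
proof -
  obtain A a b where t: "t = (A, a, b)" by (cases t)
  note cut = cutsD[OF assms(3)[unfolded t]]
  obtain a' b' where Rest_cut: "Rest_cut y t = (A \<inter> y, a', b')"
    and a': "a' \<in> A \<inter> y" "a' \<le> a" "\<And>c. c \<in> A \<inter> y \<Longrightarrow> c \<le> a \<Longrightarrow> c \<le> a'"
    and b': "b' \<in> A \<inter> y" "b \<le> b'" "\<And>c. c \<in> A \<inter> y \<Longrightarrow> b \<le> c \<Longrightarrow> b' \<le> c"
    using Rest_cut_bounds[OF partition_on_finite_block[OF assms(1,2) cut(1)] assms(4)[unfolded t]]
    unfolding t by blast
  have "A \<inter> y \<in> Rest y P" using cut(1) a'(1) by (auto simp: mem_Rest)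
  moreover have "(a', b') \<in> consecutive_pairs (A \<inter> y)"
    using a' b' cut(4,5) unfolding consecutive_pairs_def by (fastforce simp: not_less)
  ultimately show "Rest_cut y t \<in> cuts (Rest y P)" by (simp add: Rest_cut cuts_def)
  have other_trace: "C \<inter> y \<noteq> A \<inter> y" if "C \<in> P" "C \<noteq> A" for C
    using inj_on_Int_blocks[OF assms(2), of y] that cut(1) a'(1) unfolding inj_on_def by blast
  have "{x\<in>A. x \<le> a} \<inter> y = {x\<in>A \<inter> y. x \<le> a'}" "{x\<in>A. b \<le> x} \<inter> y = {x\<in>A \<inter> y. b' \<le> x}"
    using a' b' cut(5) by (fastforce simp: not_less)+
  moreover have "{x\<in>A \<inter> y. x \<le> a'} \<noteq> {}" "{x\<in>A \<inter> y. b' \<le> x} \<noteq> {}"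
    using a'(1) b'(1) by auto
  ultimately show "Rest y (split_block P t) = split_block (Rest y P) (Rest_cut y t)"
    using other_trace cut(1) unfolding Rest_cut by (auto simp: Rest_def split_block_def t)
qed

lemma Rest_cut_eq_imp_consecutive_pair:
  assumes "finite z" "partition_on z P" "A \<in> P" "A \<inter> y \<noteq> {}"
    and cut: "(B, a, b) \<in> cuts P" and sep: "separates y (B, a, b)"
    and Rest_cut: "Rest_cut y (B, a, b) = (A \<inter> y, a', b')"
  shows "B = A" "(a, b) \<in> consecutive_pairs {c\<in>A. a' \<le> c \<and> c \<le> b'}"
proof -
  note cut = cutsD[OF cut]
  obtain a'' b'' where bounds: "Rest_cut y (B, a, b) = (B \<inter> y, a'', b'')" "a'' \<le> a" "b \<le> b''"
    by (rule Rest_cut_bounds[OF partition_on_finite_block[OF assms(1,2) cut(1)] sep])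
  then have "B \<inter> y = A \<inter> y" "a'' = a'" "b'' = b'" using Rest_cut by auto
  show "B = A"
  proof (rule inj_onD[OF inj_on_Int_blocks[OF assms(2), of y]])
    show "B \<inter> y = A \<inter> y" by fact
    show "B \<in> {C\<in>P. C \<inter> y \<noteq> {}}" "A \<in> {C\<in>P. C \<inter> y \<noteq> {}}"
      using cut(1) assms(3,4) \<open>B \<inter> y = A \<inter> y\<close> by auto
  qed
  have "a \<in> {c\<in>A. a' \<le> c \<and> c \<le> b'}" "b \<in> {c\<in>A. a' \<le> c \<and> c \<le> b'}"
    using cut(2-4) bounds(2,3) \<open>a'' = a'\<close> \<open>b'' = b'\<close> \<open>B = A\<close> by auto
  moreover have "\<not> (a < c \<and> c < b)" if "c \<in> {c\<in>A. a' \<le> c \<and> c \<le> b'}" for c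
    using cut(5)[of c] that \<open>B = A\<close> by auto
  ultimately show "(a, b) \<in> consecutive_pairs {c\<in>A. a' \<le> c \<and> c \<le> b'}"
    using cut(4) unfolding consecutive_pairs_def by blast
qed

lemma consecutive_pair_imp_Rest_cut_eq:
  assumes "finite z" "partition_on z P" "A \<in> P"
    and cut': "(A \<inter> y, a', b') \<in> cuts (Rest y P)"
    and "(a, b) \<in> consecutive_pairs {c\<in>A. a' \<le> c \<and> c \<le> b'}" (is "_ \<in> consecutive_pairs ?C")
  shows "(A, a, b) \<in> cuts P" "separates y (A, a, b)" "Rest_cut y (A, a, b) = (A \<inter> y, a', b')"
proof -
  note cut' = cutsD[OF cut']
  have ab: "a \<in> ?C" "b \<in> ?C" "a < b" "\<And>c. c \<in> ?C \<Longrightarrow> a < c \<Longrightarrow> c < b \<Longrightarrow> False"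
    using assms(5) unfolding consecutive_pairs_def by auto
  have between: "c \<le> a \<or> b \<le> c" if "c \<in> A" for c
  proof (rule ccontr)
    assume "\<not> (c \<le> a \<or> b \<le> c)"
    then have "a < c" "c < b" by auto
    moreover from this have "c \<in> ?C" using that ab(1,2) by auto
    ultimately show False by (rule ab(4)[rotated 1])
  qed
  show "(A, a, b) \<in> cuts P"
    using assms(3) ab(1-3) between unfolding cuts_def consecutive_pairs_def by (auto simp: not_less)
  show sep: "separates y (A, a, b)"
    using cut'(2,3) ab(1,2) unfolding separates_def by auto
  obtain a'' b'' where bounds: "Rest_cut y (A, a, b) = (A \<inter> y, a'', b'')"
    "a'' \<in> A \<inter> y" "a'' \<le> a" "\<And>c. c \<in> A \<inter> y \<Longrightarrow> c \<le> a \<Longrightarrow> c \<le> a''"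
    "b'' \<in> A \<inter> y" "b \<le> b''" "\<And>c. c \<in> A \<inter> y \<Longrightarrow> b \<le> c \<Longrightarrow> b'' \<le> c"
    using Rest_cut_bounds[OF partition_on_finite_block[OF assms(1-3)] sep] by blast
  \<comment> \<open>no point of \<open>A \<inter> y\<close> lies strictly between \<open>a'\<close> and \<open>b'\<close>\<close>
  have "a' \<le> a''" using bounds(4)[OF cut'(2)] ab(1) by simp
  moreover have "a'' \<le> a'" using cut'(5)[OF bounds(2)] bounds(3) ab(2,3) by auto
  moreover have "b'' \<le> b'" using bounds(7)[OF cut'(3)] ab(2) by simp
  moreover have "b' \<le> b''" using cut'(5)[OF bounds(5)] bounds(6) ab(1,3) by auto
  ultimately show "Rest_cut y (A, a, b) = (A \<inter> y, a', b')" using bounds(1) by simp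
qed

lemma separating_cuts_with_Rest_cut:
  assumes "finite z" "partition_on z P" "A \<in> P" "(A \<inter> y, a', b') \<in> cuts (Rest y P)"
  shows "{t\<in>cuts P. separates y t \<and> Rest_cut y t = (A \<inter> y, a', b')}
    = (\<lambda>(a, b). (A, a, b)) ` consecutive_pairs {c\<in>A. a' \<le> c \<and> c \<le> b'}"
proof (intro equalityI subsetI)
  have "A \<inter> y \<noteq> {}" using cutsD(2)[OF assms(4)] by blast
  fix t assume "t \<in> {t\<in>cuts P. separates y t \<and> Rest_cut y t = (A \<inter> y, a', b')}"
  then obtain B a b where "t = (B, a, b)" "(B, a, b) \<in> cuts P" "separates y (B, a, b)"
    "Rest_cut y (B, a, b) = (A \<inter> y, a', b')"
    by (cases t) auto
  with Rest_cut_eq_imp_consecutive_pair[OF assms(1-3) \<open>A \<inter> y \<noteq> {}\<close>]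
  show "t \<in> (\<lambda>(a, b). (A, a, b)) ` consecutive_pairs {c\<in>A. a' \<le> c \<and> c \<le> b'}"
    by (auto intro!: image_eqI[where x = "(a, b)"])
next
  fix t assume "t \<in> (\<lambda>(a, b). (A, a, b)) ` consecutive_pairs {c\<in>A. a' \<le> c \<and> c \<le> b'}"
  then show "t \<in> {t\<in>cuts P. separates y t \<and> Rest_cut y t = (A \<inter> y, a', b')}"
    using consecutive_pair_imp_Rest_cut_eq[OF assms] by auto
qed

lemma sum_gaps_separating_cuts:
  assumes "finite z" "partition_on z P" and cut': "(A', a', b') \<in> cuts (Rest y P)"
  shows "(\<Sum>(A, a, b)\<in>{t\<in>cuts P. separates y t \<and> Rest_cut y t = (A', a', b')}. b - a) = b' - a'"
proof -
  note cut' = cutsD[OF cut']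
  obtain A where A: "A \<in> P" "A' = A \<inter> y" using cut'(1) by (auto simp: mem_Rest)
  define C where "C = {c\<in>A. a' \<le> c \<and> c \<le> b'}"
  have "finite C"
    using partition_on_finite_block[OF assms(1,2) A(1)] by (simp add: C_def)
  have "a' \<in> C" "b' \<in> C" using cut'(2-4) A(2) by (auto simp: C_def)
  have "inj_on (\<lambda>(a, b). (A, a, b)) (consecutive_pairs C)" by (auto simp: inj_on_def)
  then have "(\<Sum>(A, a, b)\<in>{t\<in>cuts P. separates y t \<and> Rest_cut y t = (A', a', b')}. b - a)
      = (\<Sum>(a, b)\<in>consecutive_pairs C. b - a)"
    unfolding A(2) separating_cuts_with_Rest_cut[OF assms(1,2) A(1) assms(3)[unfolded A(2)]] C_def[symmetric]
    by (simp add: sum.reindex case_prod_unfold)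
  also have "\<dots> = Max C - Min C"
    using \<open>finite C\<close> \<open>a' \<in> C\<close> by (intro sum_consecutive_pairs_gaps) auto
  also have "Max C = b'"
    using \<open>finite C\<close> \<open>b' \<in> C\<close> by (intro Max_eqI) (auto simp: C_def)
  also have "Min C = a'"
    using \<open>finite C\<close> \<open>a' \<in> C\<close> by (intro Min_eqI) (auto simp: C_def)
  finally show ?thesis .
qed

lemma Rest_split_block_eq_iff:
  assumes "finite z" "partition_on z P" "w \<noteq> Rest y P" "t \<in> cuts P"
  shows "Rest y (split_block P t) = w \<longleftrightarrow> separates y t \<and> split_block (Rest y P) (Rest_cut y t) = w"
  using Rest_split_block_if_not_separates[OF assms(4)] Rest_cut_in_cuts(2)[OF assms(1,2,4)] assms(3)
  by auto

lemma split_rates_lumped: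
  assumes "finite z" "y \<subseteq> z" "P \<in> partitions_of z" "w \<noteq> Rest y P"
  shows "(\<Sum>P'\<in>{P'\<in>partitions_of z. Rest y P' = w}. split_rate \<rho> P P') = split_rate \<rho> (Rest y P) w"
proof -
  have P: "partition_on z P" using assms(3) by simp
  have "partition_on y (Rest y P)" using Rest_in_partitions_of[OF assms(2,3)] by simp
  with finite_subset[OF assms(2,1)] have "finite (cuts (Rest y P))" by (rule finite_cuts)
  define gap :: "real set \<times> real \<times> real \<Rightarrow> real" where "gap = (\<lambda>(A, a, b). \<rho> * (b - a))"
  define X where "X = {t\<in>cuts P. separates y t}"
  have seen_cuts: "{t\<in>cuts P. Rest y (split_block P t) = w} = {t\<in>X. split_block (Rest y P) (Rest_cut y t) = w}"
    unfolding X_def using Rest_split_block_eq_iff[OF assms(1) P assms(4)] by blast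
  have "(\<Sum>P'\<in>{P'\<in>partitions_of z. Rest y P' = w}. split_rate \<rho> P P')
      = (\<Sum>P'\<in>{P'\<in>partitions_of z. Rest y P' = w}. \<Sum>t\<in>{t\<in>cuts P. split_block P t = P'}. gap t)"
    by (simp add: split_rate_eq_sum gap_def)
  also have "\<dots> = (\<Sum>t\<in>{t\<in>cuts P. Rest y (split_block P t) = w}. gap t)"
    using finite_cuts[OF assms(1) P] finite_partitions_of[OF assms(1)] split_block_in_partitions_of[OF P]
    by (intro sum_group_filter) auto
  also have "\<dots> = (\<Sum>t\<in>{t\<in>X. split_block (Rest y P) (Rest_cut y t) = w}. gap t)"
    unfolding seen_cuts ..
  also have "\<dots> = (\<Sum>t'\<in>{t'\<in>cuts (Rest y P). split_block (Rest y P) t' = w}.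
      \<Sum>t\<in>{t\<in>X. Rest_cut y t = t'}. gap t)"
    using finite_cuts[OF assms(1) P] \<open>finite (cuts (Rest y P))\<close> Rest_cut_in_cuts(1)[OF assms(1) P]
    by (intro sum_group_filter[symmetric]) (auto simp: X_def)
  also have "\<dots> = (\<Sum>t'\<in>{t'\<in>cuts (Rest y P). split_block (Rest y P) t' = w}. gap t')"
  proof (intro sum.cong refl)
    fix t' assume "t' \<in> {t'\<in>cuts (Rest y P). split_block (Rest y P) t' = w}"
    then obtain A' a' b' where "t' = (A', a', b')" "(A', a', b') \<in> cuts (Rest y P)"
      by (cases t') auto
    then show "(\<Sum>t\<in>{t\<in>X. Rest_cut y t = t'}. gap t) = gap t'"
      using sum_gaps_separating_cuts[OF assms(1) P, of A' a' b' y]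
      by (simp add: X_def gap_def case_prod_unfold conj_assoc flip: sum_distrib_left)
  qed
  finally show ?thesis
    unfolding gap_def split_rate_eq_sum[of \<rho> "Rest y P" w] .
qed

section \<open>The generator of the ancestral recombination graph\<close>

lemma split_rate_nonneg:
  assumes "0 \<le> \<rho>"
  shows "0 \<le> split_rate \<rho> P P'"
  unfolding split_rate_eq_sum using assms
  by (intro sum_nonneg) (auto simp: cuts_def consecutive_pairs_def)

lemma jump_rate_nonneg: "0 \<le> \<rho> \<Longrightarrow> 0 \<le> jump_rate \<rho> P P'"
  by (simp add: jump_rate_def merge_rate_def split_rate_nonneg)

lemma jump_rate_eq_0_outside:
  assumes "P \<in> partitions_of z" "P' \<notin> partitions_of z"
  shows "jump_rate \<rho> P P' = 0"
proof -
  have no_merge: "{p\<in>block_pairs P. merge_blocks P p = P'} = {}"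
    using merge_blocks_in_partitions_of[of z P] assms by auto
  have no_split: "{t\<in>cuts P. split_block P t = P'} = {}"
    using split_block_in_partitions_of[of z P] assms by auto
  show ?thesis
    unfolding jump_rate_def merge_rate_eq_card split_rate_eq_sum no_merge no_split by simp
qed

lemma q_matrix_arg_gen:
  assumes "0 \<le> \<rho>" "finite z"
  shows "q_matrix (partitions_of z) (arg_gen \<rho> z)"
proof
  show "finite (partitions_of z)" by (rule finite_partitions_of[OF assms(2)])
  show "0 \<le> arg_gen \<rho> z P P'" if "P \<noteq> P'" for P P'
    using that jump_rate_nonneg[OF assms(1)] by (simp add: arg_gen_def)
  fix P assume P: "P \<in> partitions_of z"
  have "(\<Sum>P'\<in>partitions_of z. arg_gen \<rho> z P P')
      = arg_gen \<rho> z P P + (\<Sum>P'\<in>partitions_of z - {P}. arg_gen \<rho> z P P')"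
    using P finite_partitions_of[OF assms(2)] by (simp add: sum.remove)
  also have "(\<Sum>P'\<in>partitions_of z - {P}. arg_gen \<rho> z P P') = (\<Sum>P'\<in>partitions_of z - {P}. jump_rate \<rho> P P')"
    by (intro sum.cong refl) (auto simp: arg_gen_def)
  finally show "(\<Sum>P'\<in>partitions_of z. arg_gen \<rho> z P P') = 0"
    by (simp add: arg_gen_def)
qed

lemma lumping_arg_gen:
  assumes "0 \<le> \<rho>" "finite z" "y \<subseteq> z"
  shows "lumping (partitions_of z) (partitions_of y) (Rest y) (arg_gen \<rho> z) (arg_gen \<rho> y)"
proof
  have "finite y" using assms(2,3) by (rule finite_subset[rotated])
  show "finite (partitions_of z)" "finite (partitions_of y)"
    using finite_partitions_of assms(2) \<open>finite y\<close> by auto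
  show "Rest y ` partitions_of z \<subseteq> partitions_of y"
    using Rest_in_partitions_of[OF assms(3)] by blast
  show "arg_gen \<rho> y v w = 0" if "v \<in> partitions_of y" "w \<notin> partitions_of y" for v w
    using that jump_rate_eq_0_outside[OF that] by (auto simp: arg_gen_def)
  fix P w assume P: "P \<in> partitions_of z" and w: "w \<in> partitions_of y"
  show "(\<Sum>P'\<in>{P'\<in>partitions_of z. Rest y P' = w}. arg_gen \<rho> z P P') = arg_gen \<rho> y (Rest y P) w"
  proof (rule lumped_rates_if_off_diagonal[OF q_matrix_arg_gen[OF assms(1,2)]
        q_matrix_arg_gen[OF assms(1) \<open>finite y\<close>] _ _ P w])
    show "Rest y ` partitions_of z \<subseteq> partitions_of y"
      using Rest_in_partitions_of[OF assms(3)] by blast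
    fix P w assume P: "P \<in> partitions_of z" and "w \<in> partitions_of y" "w \<noteq> Rest y P"
    then have "(\<Sum>P'\<in>{P'\<in>partitions_of z. Rest y P' = w}. arg_gen \<rho> z P P')
        = (\<Sum>P'\<in>{P'\<in>partitions_of z. Rest y P' = w}. merge_rate P P' + split_rate \<rho> P P')"
      by (intro sum.cong refl) (auto simp: arg_gen_def jump_rate_def)
    also have "\<dots> = merge_rate (Rest y P) w + split_rate \<rho> (Rest y P) w"
      using merge_rates_lumped[OF assms(2) P] split_rates_lumped[OF assms(2,3) P] \<open>w \<noteq> Rest y P\<close>
      by (simp add: sum.distrib)
    also have "\<dots> = arg_gen \<rho> y (Rest y P) w"
      using \<open>w \<noteq> Rest y P\<close> by (simp add: arg_gen_def jump_rate_def)
    finally show "(\<Sum>P'\<in>{P'\<in>partitions_of z. Rest y P' = w}. arg_gen \<rho> z P P') = arg_gen \<rho> y (Rest y P) w" .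
  qed
qed

section \<open>Irreducibility\<close>

lemma cut_at_Min:
  assumes "A \<in> P" "finite A" "a \<in> A" "b \<in> A" "a \<noteq> b"
  shows "(A, Min A, Min (A - {Min A})) \<in> cuts P"
    and "split_block P (A, Min A, Min (A - {Min A})) = insert {Min A} (insert (A - {Min A}) (P - {A}))"
proof -
  define m where "m = Min A"
  have "A \<noteq> {}" using assms(3) by blast
  then have m: "m \<in> A" "\<And>c. c \<in> A \<Longrightarrow> m \<le> c"
    using assms(2) by (simp_all add: m_def)
  have ne: "A - {m} \<noteq> {}" using assms(3-5) by blast
  have fin: "finite (A - {m})" using assms(2) by simp
  have m2: "Min (A - {m}) \<in> A - {m}" "\<And>c. c \<in> A - {m} \<Longrightarrow> Min (A - {m}) \<le> c"
    using Min_in[OF fin ne] Min_le[OF fin] by blast+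
  have "m < Min (A - {m})" using m m2(1) by force
  moreover have "\<not> (m < c \<and> c < Min (A - {m}))" if "c \<in> A" for c
    using m2(2)[of c] that by force
  ultimately show "(A, Min A, Min (A - {Min A})) \<in> cuts P"
    using assms(1) m m2(1) unfolding cuts_def consecutive_pairs_def m_def by blast
  have "{x\<in>A. x \<le> m} = {m}" using m by force
  moreover have "{x\<in>A. Min (A - {m}) \<le> x} = A - {m}"
    using m2 \<open>m < Min (A - {m})\<close> by force
  ultimately show "split_block P (A, Min A, Min (A - {Min A})) = insert {Min A} (insert (A - {Min A}) (P - {A}))"
    by (simp add: split_block_def m_def)
qed

lemma split_off_point:
  assumes "finite P" "partition_on z P" "A \<in> P" "m \<in> A" "A \<noteq> {m}"
  defines "P' \<equiv> insert {m} (insert (A - {m}) (P - {A}))"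
  shows "card P' = Suc (card P)" "{{m}, A - {m}} \<in> block_pairs P'" "merge_blocks P' {{m}, A - {m}} = P"
proof -
  have new_block: "C \<notin> P - {A}" if "C \<subseteq> A" "C \<noteq> {}" for C
    using partition_onD2[OF assms(2)] that assms(3) by (auto simp: disjoint_def)
  have "{m} \<notin> P - {A}" "A - {m} \<notin> P - {A}" "{m} \<noteq> A - {m}"
    using new_block[of "{m}"] new_block[of "A - {m}"] assms(4,5) by auto
  then show "card P' = Suc (card P)"
    using assms(1,3) by (simp add: P'_def card_Diff_singleton) (metis Suc_pred card_gt_0_iff empty_iff)
  show "{{m}, A - {m}} \<in> block_pairs P'"
    using \<open>{m} \<noteq> A - {m}\<close> unfolding block_pairs_def P'_def by blast
  have "\<Union>{{m}, A - {m}} = A" using assms(4) by auto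
  moreover have "P' - {{m}, A - {m}} = P - {A}"
    using \<open>{m} \<notin> P - {A}\<close> \<open>A - {m} \<notin> P - {A}\<close> by (auto simp: P'_def)
  ultimately have "merge_blocks P' {{m}, A - {m}} = insert A (P - {A})"
    by (simp add: merge_blocks_def)
  also have "\<dots> = P" using assms(3) by (rule insert_Diff)
  finally show "merge_blocks P' {{m}, A - {m}} = P" .
qed

lemma refinement_step:
  assumes "0 < \<rho>" "finite z" and P: "partition_on z P" and "A \<in> P" "a \<in> A" "b \<in> A" "a \<noteq> b"
  obtains P' where "P' \<in> partitions_of z" "card P' = Suc (card P)"
    "0 < split_rate \<rho> P P'" "0 < merge_rate P' P"
proof -
  define m where "m = Min A"
  have "finite A" by (rule partition_on_finite_block[OF assms(2) P assms(4)])
  note cut = cut_at_Min[OF assms(4) this assms(5-7), folded m_def]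
  define P' where "P' = insert {m} (insert (A - {m}) (P - {A}))"
  have "m \<in> A" "A \<noteq> {m}" using cutsD(2,3,4)[OF cut(1)] by auto
  note split_off = split_off_point[OF finite_elements[OF assms(2) P] P assms(4) this, folded P'_def]
  have "P' \<in> partitions_of z"
    using split_block_in_partitions_of[OF P cut(1)] cut(2) by (simp add: P'_def)
  have "0 < \<rho> * (Min (A - {m}) - m)"
    using assms(1) cutsD(4)[OF cut(1)] by simp
  also have "\<dots> \<le> split_rate \<rho> P P'"
    unfolding split_rate_eq_sum using cut finite_cuts[OF assms(2) P] assms(1)
    by (intro member_le_sum[where i = "(A, m, Min (A - {m}))" and f = "\<lambda>(A, a, b). \<rho> * (b - a)", simplified])
      (auto simp: P'_def cuts_def consecutive_pairs_def)
  finally have "0 < split_rate \<rho> P P'" .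
  moreover have "0 < merge_rate P' P"
    using split_off(2,3) finite_block_pairs[of P'] finite_elements[OF assms(2) P]
    unfolding merge_rate_eq_card by (auto simp: P'_def card_gt_0_iff)
  ultimately show ?thesis using that \<open>P' \<in> partitions_of z\<close> split_off(1) by blast
qed

context
  fixes \<rho> :: real and z :: "real set"
  assumes \<rho>: "0 < \<rho>" and finite_z: "finite z"
begin

interpretation q_matrix "partitions_of z" "arg_gen \<rho> z"
  using q_matrix_arg_gen \<rho> finite_z by simp

lemma arg_transition_if_pos:
  assumes "P \<in> partitions_of z" "P' \<in> partitions_of z" "P \<noteq> P'"
    and "0 < merge_rate P P' \<or> 0 < split_rate \<rho> P P'"
  shows "(P, P') \<in> transitions"
  using assms jump_rate_nonneg[of \<rho> P P'] \<rho> merge_rate_eq_card[of P P'] split_rate_nonneg[of \<rho> P P']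
  by (auto simp: transitions_def arg_gen_def jump_rate_def)

lemma arg_connected_to_singletons:
  assumes "P \<in> partitions_of z"
  shows "(P, (\<lambda>a. {a}) ` z) \<in> transitions\<^sup>* \<and> ((\<lambda>a. {a}) ` z, P) \<in> transitions\<^sup>*"
  using assms
proof (induction "card z - card P" arbitrary: P rule: less_induct)
  case less
  then have P: "partition_on z P" by simp
  show ?case
  proof (cases "\<exists>A\<in>P. \<exists>a\<in>A. \<exists>b\<in>A. a \<noteq> b")
    case False
    then show ?thesis using partition_on_eq_singletons[OF P] by blast
  next
    case True
    then obtain A a b where "A \<in> P" "a \<in> A" "b \<in> A" "a \<noteq> b" by blast
    then obtain P' where P': "P' \<in> partitions_of z" "card P' = Suc (card P)"
      "0 < split_rate \<rho> P P'" "0 < merge_rate P' P"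
      using refinement_step[OF \<rho> finite_z P] by metis
    have "card P' \<le> card z" using card_partition_on_le[OF finite_z] P'(1) by simp
    then have "card z - card P' < card z - card P" using P'(2) by simp
    then have "(P', (\<lambda>a. {a}) ` z) \<in> transitions\<^sup>*" "((\<lambda>a. {a}) ` z, P') \<in> transitions\<^sup>*"
      using less.hyps P'(1) by blast+
    moreover have "(P, P') \<in> transitions" "(P', P) \<in> transitions"
      using arg_transition_if_pos less.prems P' by (metis n_not_Suc_n)+
    ultimately show ?thesis by auto
  qed
qed

lemma ex1_arg_invariant: "\<exists>!\<mu>. arg_invariant \<rho> z \<mu>"
proof -
  have "(P, P') \<in> transitions\<^sup>*" if "P \<in> partitions_of z" "P' \<in> partitions_of z" for P P'
    using arg_connected_to_singletons[OF that(1)] arg_connected_to_singletons[OF that(2)] by auto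
  then show ?thesis
    unfolding arg_invariant_iff_invariant_law
    using ex1_invariant_law singletons_in_partitions_of by blast
qed

lemma invariant_law_arg_mu: "invariant_law (partitions_of z) (arg_gen \<rho> z) (arg_mu \<rho> z)"
  using theI'[OF ex1_arg_invariant] by (simp add: arg_mu_def arg_invariant_iff_invariant_law)

end

section \<open>Restriction of the ARG\<close>

theorem proposition2:
  fixes \<rho> :: real and y z :: "real set"
  assumes "\<rho> > 0" and "finite z" and "y \<subseteq> z" and "\<forall>x\<in>z. 0 \<le> x"
  shows "(\<forall>\<pi> :: real set set pmf. \<forall>ts ws.
            set_pmf \<pi> \<subseteq> partitions_of z \<and> sorted ts \<and> (\<forall>t\<in>set ts. 0 \<le> t) \<and>
            length ws = length ts \<longrightarrow>
            arg_fdd \<rho> y (map_pmf (Rest y) \<pi>) ts ws =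
            (\<Sum>xs\<in>{xs. length xs = length ts \<and> set xs \<subseteq> partitions_of z \<and> map (Rest y) xs = ws}.
               arg_fdd \<rho> z \<pi> ts xs))
         \<and> arg_mu \<rho> y = map_pmf (Rest y) (arg_mu \<rho> z)"
proof -
  have "finite y" using assms(2,3) by (rule finite_subset[rotated])
  interpret lumping "partitions_of z" "partitions_of y" "Rest y" "arg_gen \<rho> z" "arg_gen \<rho> y"
    using lumping_arg_gen assms(1-3) by simp
  have "arg_fdd \<rho> y (map_pmf (Rest y) \<pi>) ts ws =
      (\<Sum>xs\<in>{xs. length xs = length ts \<and> set xs \<subseteq> partitions_of z \<and> map (Rest y) xs = ws}.
         arg_fdd \<rho> z \<pi> ts xs)"
    if "set_pmf \<pi> \<subseteq> partitions_of z" for \<pi> :: "real set set pmf" and ts ws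
    unfolding arg_fdd_def arg_trans_eq_mat_exp by (rule lumped_path_law[OF that])
  moreover have "arg_mu \<rho> y = map_pmf (Rest y) (arg_mu \<rho> z)"
    using invariant_law_map[OF invariant_law_arg_mu[OF assms(1,2)]]
      invariant_law_arg_mu[OF assms(1) \<open>finite y\<close>] ex1_arg_invariant[OF assms(1) \<open>finite y\<close>]
    unfolding arg_invariant_iff_invariant_law by blast
  ultimately show ?thesis by blast
qed

end
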